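(* Let $\Sigma_1\subset(N_1)_{\mathbf R}$ and $\Sigma_2\subset(N_2)_{\mathbf R}$ be amply equivalent complete fans. For every $\mathbf Q$-ample divisor $D$ on $X_{\Sigma_2}$, the assignment of strata $S^{\varphi^*(\chi_D)}_\lambda\mapsto S^{\chi_D}_{\varphi(\lambda)}$, defined for $\lambda\in\Gamma(G_1)_{\mathbf Q}$, is an equivalence between the stratification of $Z(\Sigma)$ induced by $\varphi^*(D)$ on $X_{\Sigma_1}$ and the stratification of $Z(\Sigma)$ induced by $D$ on $X_{\Sigma_2}$. The same holds for $\mathbf R$-ample divisors $D$ on $X_{\Sigma_2}$ and $\lambda\in\Gamma(G_1)_{\mathbf R}$ (using the $\mathbf R$-linear extensions of $\varphi,\varphi^*$).
   Context: For a complete fan $\Sigma$ in $N_{\mathbf R}$: rays $\Sigma(1)$, primitive generators $u_\rho$, divisors $D_\rho$; a primitive collection is $C\subset\Sigma(1)$ not contained in $\sigma(1)$ for any cone $\sigma$, every proper subset of which is. Two complete fans $\Sigma_1\subset(N_1)_{\mathbf R}$, $\Sigma_2\subset(N_2)_{\mathbf R}$ with $\mathrm{rank}N_1=\mathrm{rank}N_2$ are amply equivalent if there is a bijection $\Psi:\Sigma_1(1)\to\Sigma_2(1)$ such that $C$ is a primitive collection of $\Sigma_1$ iff $\Psi(C)$ is one of $\Sigma_2$, and for all integers $(a_\rho)$, $\sum a_\rho u_\rho=0\iff\sum a_\rho u_{\Psi(\rho)}=0$. Via $\Psi$ identify $\mathbf C^{\Sigma_1(1)}$ and $\mathbf C^{\Sigma_2(1)}$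 with a common $\mathbf C^{\Sigma(1)}=\mathrm{Spec}\,\mathbf C[x_\rho]$; then $Z(\Sigma_i)=\bigcup_C V(x_\rho:\rho\in C)$ (over primitive collections) coincide, denoted $Z(\Sigma)$. $G_i=\mathrm{Hom}(\mathrm{Cl}(X_{\Sigma_i}),\mathbf C^\times)\subset(\mathbf C^\times)^{\Sigma_i(1)}$ acts coordinatewise; $\Gamma(G_i)=\{b\in\mathbf Z^{\Sigma_i(1)}:\sum b_\rho u_\rho=0\}$, with $\langle\chi_D,b\rangle=\sum a_\rho b_\rho$ for $D=\sum a_\rho D_\rho$, and $\Gamma(G_i)_{\mathbf R}\subset\mathbf R^{\Sigma_i(1)}$ has the restricted standard inner product. $\varphi:\Gamma(G_1)_{\mathbf Q}\to\Gamma(G_2)_{\mathbf Q}$ is the isomorphism $(b_\rho)_{\rho\in\Sigma_1(1)}\mapsto(b_{\Psi^{-1}(\rho')})_{\rho'\in\Sigma_2(1)}$, and $\varphi^*:\mathrm{Cl}(X_{\Sigma_2})_{\mathbf Q}\to\mathrm{Cl}(X_{\Sigma_1})_{\mathbf Q}$ is its dual, sending the class of $\sum q_\rho D_{\Psi(\rho)}$ to that of $\sum q_\rho D_\rho$; it maps $\mathbf Q$-ample divisors onto $\mathbf Q$-ample divisors, and $\varphi^*(\chi_D)=\chi_{\varphi^*(D)}$. For a projective toric $X_\Sigma$ and $\mathbf R$-ample $D$ (element of the ample cone in $\mathrm{Pic}(X_\Sigma)_{\mathbf R}$): let $\chi_D^*\in\Gamma(G)_{\mathbf R}$ with $(\chi_D^*,v)=\langle\chi_D,v\rangle$;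 for $x\in Z(\Sigma)$, with $S_x=\{\rho:x_\rho\ne0\}$, $\sigma_x=\{v\in\Gamma(G)_{\mathbf R}:v_\rho\ge0\ \forall\rho\in S_x\}$, let $\lambda^D_x\in\sigma_x$ be the unique vector on the ray where $v\mapsto\langle\chi_D,v\rangle/\|v\|$ attains its minimum $M^D(x)$ on $\sigma_x\setminus\{0\}$, normalized by $\|\lambda^D_x\|=-M^D(x)$. The strata of $Z(\Sigma)$ induced by $D$ are $S^{\chi_D}_\lambda=\{x\in Z(\Sigma):\lambda^D_x=\lambda\}$ (nonempty ones), ordered by $S^{\chi_D}_\lambda>S^{\chi_D}_{\lambda'}$ iff $\|\lambda\|>\|\lambda'\|$. Two stratifications are equivalent if there is a bijection of index sets preserving each stratum as a set and preserving the strict order in both directions. *)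

theory Defs
  imports "HOL-Analysis.Analysis"
begin

section \<open>Fans in N_R = R^n with lattice N = Z^n\<close>

definition lattice_pt :: "real^'n \<Rightarrow> bool" where
  "lattice_pt v \<longleftrightarrow> (\<forall>i. v $ i \<in> \<int>)"

definition rat_poly_cone :: "(real^'n) set \<Rightarrow> bool" where
  "rat_poly_cone \<sigma> \<longleftrightarrow> (\<exists>S. finite S \<and> (\<forall>v\<in>S. lattice_pt v) \<and>
      \<sigma> = {\<Sum>v\<in>S. c v *\<^sub>R v | c. \<forall>v\<in>S. c v \<ge> 0})"

definition strongly_convex :: "(real^'n) set \<Rightarrow> bool" where
  "strongly_convex \<sigma> \<longleftrightarrow> \<sigma> \<inter> uminus ` \<sigma> \<subseteq> {0}"

definition is_fan :: "(real^'n) set set \<Rightarrow> bool" where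
  "is_fan \<Sigma> \<longleftrightarrow> finite \<Sigma> \<and> \<Sigma> \<noteq> {}
     \<and> (\<forall>\<sigma>\<in>\<Sigma>. rat_poly_cone \<sigma> \<and> strongly_convex \<sigma>)
     \<and> (\<forall>\<sigma>\<in>\<Sigma>. \<forall>\<tau>. \<tau> face_of \<sigma> \<and> \<tau> \<noteq> {} \<longrightarrow> \<tau> \<in> \<Sigma>)
     \<and> (\<forall>\<sigma>\<in>\<Sigma>. \<forall>\<tau>\<in>\<Sigma>. (\<sigma> \<inter> \<tau>) face_of \<sigma> \<and> (\<sigma> \<inter> \<tau>) face_of \<tau>)"

definition complete_fan :: "(real^'n) set set \<Rightarrow> bool" where
  "complete_fan \<Sigma> \<longleftrightarrow> is_fan \<Sigma> \<and> \<Union>\<Sigma> = UNIV"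

definition rays :: "(real^'n) set set \<Rightarrow> (real^'n) set set" where
  "rays \<Sigma> = {\<rho>\<in>\<Sigma>. aff_dim \<rho> = 1}"

definition cone_rays :: "(real^'n) set set \<Rightarrow> (real^'n) set \<Rightarrow> (real^'n) set set" where
  "cone_rays \<Sigma> \<sigma> = {\<rho>\<in>rays \<Sigma>. \<rho> \<subseteq> \<sigma>}"

definition prim_gen :: "(real^'n) set \<Rightarrow> real^'n" where
  "prim_gen \<rho> = (THE v. v \<in> \<rho> \<and> lattice_pt v \<and> v \<noteq> 0 \<and>
       (\<forall>w\<in>\<rho>. lattice_pt w \<longrightarrow> (\<exists>k::int. w = of_int k *\<^sub>R v)))"

definition primitive_collection :: "(real^'n) set set \<Rightarrow> (real^'n) set set \<Rightarrow> bool" where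
  "primitive_collection \<Sigma> C \<longleftrightarrow> C \<subseteq> rays \<Sigma>
     \<and> \<not> (\<exists>\<sigma>\<in>\<Sigma>. C \<subseteq> cone_rays \<Sigma> \<sigma>)
     \<and> (\<forall>C'. C' \<subset> C \<longrightarrow> (\<exists>\<sigma>\<in>\<Sigma>. C' \<subseteq> cone_rays \<Sigma> \<sigma>))"

definition maximal_cones :: "(real^'n) set set \<Rightarrow> (real^'n) set set" where
  "maximal_cones \<Sigma> = {\<sigma>\<in>\<Sigma>. \<not> (\<exists>\<tau>\<in>\<Sigma>. \<sigma> \<subset> \<tau>)}"

definition amply_equivalent ::
  "(real^'n) set set \<Rightarrow> (real^'m) set set \<Rightarrow> ((real^'n) set \<Rightarrow> (real^'m) set) \<Rightarrow> bool" where
  "amply_equivalent \<Sigma>1 \<Sigma>2 \<Psi> \<longleftrightarrow>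
     complete_fan \<Sigma>1 \<and> complete_fan \<Sigma>2 \<and> CARD('n) = CARD('m)
     \<and> bij_betw \<Psi> (rays \<Sigma>1) (rays \<Sigma>2)
     \<and> (\<forall>C. C \<subseteq> rays \<Sigma>1 \<longrightarrow> (primitive_collection \<Sigma>1 C \<longleftrightarrow> primitive_collection \<Sigma>2 (\<Psi> ` C)))
     \<and> (\<forall>a :: (real^'n) set \<Rightarrow> int.
          (\<Sum>\<rho>\<in>rays \<Sigma>1. of_int (a \<rho>) *\<^sub>R prim_gen \<rho>) = 0 \<longleftrightarrow>
          (\<Sum>\<rho>\<in>rays \<Sigma>1. of_int (a \<rho>) *\<^sub>R prim_gen (\<Psi> \<rho>)) = 0)"

text \<open>Points of C^{Sigma(1)}: complex functions on the rays (zero off Sigma(1)).\<close>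
definition cspace :: "(real^'n) set set \<Rightarrow> ((real^'n) set \<Rightarrow> complex) set" where
  "cspace \<Sigma> = {x. \<forall>\<rho>. \<rho> \<notin> rays \<Sigma> \<longrightarrow> x \<rho> = 0}"

definition Zlocus :: "(real^'n) set set \<Rightarrow> ((real^'n) set \<Rightarrow> complex) set" where
  "Zlocus \<Sigma> = (\<Union>C\<in>{C. primitive_collection \<Sigma> C}. {x\<in>cspace \<Sigma>. \<forall>\<rho>\<in>C. x \<rho> = 0})"

text \<open>Gamma(G)_R = Gamma(G) \<otimes> R = real relations among the u_rho, inside R^{Sigma(1)}.\<close>
definition GammaR :: "(real^'n) set set \<Rightarrow> ((real^'n) set \<Rightarrow> real) set" where
  "GammaR \<Sigma> = {b. (\<forall>\<rho>. \<rho> \<notin> rays \<Sigma> \<longrightarrow> b \<rho> = 0) \<and> (\<Sum>\<rho>\<in>rays \<Sigma>. b \<rho> *\<^sub>R prim_gen \<rho>) = 0}"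

definition GammaQ :: "(real^'n) set set \<Rightarrow> ((real^'n) set \<Rightarrow> real) set" where
  "GammaQ \<Sigma> = {b\<in>GammaR \<Sigma>. \<forall>\<rho>. b \<rho> \<in> \<rat>}"

text \<open>Pairing <chi_D, v> = sum a_rho v_rho for D = sum a_rho D_rho.\<close>
definition pairing :: "(real^'n) set set \<Rightarrow> ((real^'n) set \<Rightarrow> real) \<Rightarrow> ((real^'n) set \<Rightarrow> real) \<Rightarrow> real" where
  "pairing \<Sigma> a v = (\<Sum>\<rho>\<in>rays \<Sigma>. a \<rho> * v \<rho>)"

definition vnorm :: "(real^'n) set set \<Rightarrow> ((real^'n) set \<Rightarrow> real) \<Rightarrow> real" where
  "vnorm \<Sigma> v = sqrt (\<Sum>\<rho>\<in>rays \<Sigma>. (v \<rho>)\<^sup>2)"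

text \<open>D = sum a_rho D_rho (real coefficients) is R-ample iff its support function is
  strictly convex: for every maximal cone sigma there is m_sigma in M_R with
  <m_sigma,u_rho> = -a_rho for rho in sigma(1) and > -a_rho otherwise.\<close>
definition ample_div :: "(real^'n) set set \<Rightarrow> ((real^'n) set \<Rightarrow> real) \<Rightarrow> bool" where
  "ample_div \<Sigma> a \<longleftrightarrow> (\<forall>\<sigma>\<in>maximal_cones \<Sigma>. \<exists>m::real^'n.
      (\<forall>\<rho>\<in>cone_rays \<Sigma> \<sigma>. inner m (prim_gen \<rho>) = - a \<rho>) \<and>
      (\<forall>\<rho>\<in>rays \<Sigma> - cone_rays \<Sigma> \<sigma>. inner m (prim_gen \<rho>) > - a \<rho>))"

definition divisor :: "(real^'n) set set \<Rightarrow> ((real^'n) set \<Rightarrow> real) \<Rightarrow> bool" where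
  "divisor \<Sigma> a \<longleftrightarrow> (\<forall>\<rho>. \<rho> \<notin> rays \<Sigma> \<longrightarrow> a \<rho> = 0)"

definition R_ample :: "(real^'n) set set \<Rightarrow> ((real^'n) set \<Rightarrow> real) \<Rightarrow> bool" where
  "R_ample \<Sigma> a \<longleftrightarrow> divisor \<Sigma> a \<and> ample_div \<Sigma> a"

definition Q_ample :: "(real^'n) set set \<Rightarrow> ((real^'n) set \<Rightarrow> real) \<Rightarrow> bool" where
  "Q_ample \<Sigma> a \<longleftrightarrow> R_ample \<Sigma> a \<and> (\<forall>\<rho>. a \<rho> \<in> \<rat>)"

definition sigma_x :: "(real^'n) set set \<Rightarrow> ((real^'n) set \<Rightarrow> complex) \<Rightarrow> ((real^'n) set \<Rightarrow> real) set" where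
  "sigma_x \<Sigma> x = {v\<in>GammaR \<Sigma>. \<forall>\<rho>\<in>rays \<Sigma>. x \<rho> \<noteq> 0 \<longrightarrow> v \<rho> \<ge> 0}"

definition Mval :: "(real^'n) set set \<Rightarrow> ((real^'n) set \<Rightarrow> real) \<Rightarrow> ((real^'n) set \<Rightarrow> complex) \<Rightarrow> real" where
  "Mval \<Sigma> a x = Inf ((\<lambda>v. pairing \<Sigma> a v / vnorm \<Sigma> v) ` (sigma_x \<Sigma> x - {\<lambda>_. 0}))"

definition lam :: "(real^'n) set set \<Rightarrow> ((real^'n) set \<Rightarrow> real) \<Rightarrow> ((real^'n) set \<Rightarrow> complex) \<Rightarrow> ((real^'n) set \<Rightarrow> real)" where
  "lam \<Sigma> a x = (THE l. l \<in> sigma_x \<Sigma> x \<and> vnorm \<Sigma> l = - Mval \<Sigma> a x \<and>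
       (l \<noteq> (\<lambda>_. 0) \<longrightarrow> pairing \<Sigma> a l / vnorm \<Sigma> l = Mval \<Sigma> a x))"

definition stratum :: "(real^'n) set set \<Rightarrow> ((real^'n) set \<Rightarrow> real) \<Rightarrow> ((real^'n) set \<Rightarrow> real) \<Rightarrow> ((real^'n) set \<Rightarrow> complex) set" where
  "stratum \<Sigma> a l = {x\<in>Zlocus \<Sigma>. lam \<Sigma> a x = l}"

definition strata_index :: "(real^'n) set set \<Rightarrow> ((real^'n) set \<Rightarrow> real) \<Rightarrow> real set \<Rightarrow> ((real^'n) set \<Rightarrow> real) set" where
  "strata_index \<Sigma> a K = {l\<in>GammaR \<Sigma>. (\<forall>\<rho>. l \<rho> \<in> K) \<and> stratum \<Sigma> a l \<noteq> {}}"

definition phi :: "(real^'n) set set \<Rightarrow> (real^'m) set set \<Rightarrow> ((real^'n) set \<Rightarrow> (real^'m) set)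
    \<Rightarrow> ((real^'n) set \<Rightarrow> real) \<Rightarrow> ((real^'m) set \<Rightarrow> real)" where
  "phi \<Sigma>1 \<Sigma>2 \<Psi> b = (\<lambda>\<rho>'. if \<rho>' \<in> rays \<Sigma>2 then b (inv_into (rays \<Sigma>1) \<Psi> \<rho>') else 0)"

definition phi_star :: "(real^'n) set set \<Rightarrow> ((real^'n) set \<Rightarrow> (real^'m) set)
    \<Rightarrow> ((real^'m) set \<Rightarrow> real) \<Rightarrow> ((real^'n) set \<Rightarrow> real)" where
  "phi_star \<Sigma>1 \<Psi> a = (\<lambda>\<rho>. if \<rho> \<in> rays \<Sigma>1 then a (\<Psi> \<rho>) else 0)"

text \<open>Identification C^{Sigma2(1)} \<rightarrow> C^{Sigma1(1)} via Psi.\<close>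
definition pull :: "(real^'n) set set \<Rightarrow> ((real^'n) set \<Rightarrow> (real^'m) set)
    \<Rightarrow> ((real^'m) set \<Rightarrow> complex) \<Rightarrow> ((real^'n) set \<Rightarrow> complex)" where
  "pull \<Sigma>1 \<Psi> y = (\<lambda>\<rho>. if \<rho> \<in> rays \<Sigma>1 then y (\<Psi> \<rho>) else 0)"

text \<open>The assignment S^{phi^* chi_D}_lambda \<mapsto> S^{chi_D}_{phi lambda} (lambda with
  coefficients in K) is an equivalence of stratifications.\<close>
definition strat_equiv :: "(real^'n) set set \<Rightarrow> (real^'m) set set \<Rightarrow> ((real^'n) set \<Rightarrow> (real^'m) set)
    \<Rightarrow> ((real^'m) set \<Rightarrow> real) \<Rightarrow> real set \<Rightarrow> bool" where
  "strat_equiv \<Sigma>1 \<Sigma>2 \<Psi> a K \<longleftrightarrow>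
     (let a1 = phi_star \<Sigma>1 \<Psi> a; f = phi \<Sigma>1 \<Sigma>2 \<Psi>;
          I1 = strata_index \<Sigma>1 a1 K; I2 = strata_index \<Sigma>2 a K in
      bij_betw f I1 I2
      \<and> (\<forall>l\<in>I1. stratum \<Sigma>1 a1 l = pull \<Sigma>1 \<Psi> ` stratum \<Sigma>2 a (f l))
      \<and> (\<forall>l\<in>I1. \<forall>l'\<in>I1. vnorm \<Sigma>1 l > vnorm \<Sigma>1 l' \<longleftrightarrow> vnorm \<Sigma>2 (f l) > vnorm \<Sigma>2 (f l')))"

end

(*
  Via Psi both fans have the same rays and the same primitive collections, hence the same
  unstable locus Z. Their integer relations among primitive generators agree; applying a
  Q-linear functional R -> Q to a real relation turns it into a rational one, so the real
  relation spaces Gamma(G_i)_R agree as well and phi is an isometry between them carrying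
  sigma_x to sigma_x and the pairing with phi^*(D) to the pairing with D. The minimization
  defining lambda_x is therefore the same problem for both fans, and the strata correspond.

  What has to be checked is that this problem has a unique solution, so that lambda_x is
  well defined. Ampleness yields a direction of negative pairing in sigma_x: for a primitive
  collection C on which x vanishes, write the sum of the generators of C inside a maximal
  cone; the resulting relation pairs negatively with D by strict convexity of its support
  function. Compactness of the unit sphere in sigma_x gives a minimizer of the normalized
  pairing, and the parallelogram law makes it unique.
*)

theory Submission
  imports Defs
begin

section \<open>Finitely generated cones and half-lines\<close>

definition nonneg_span :: "'a::real_vector set \<Rightarrow> 'a set" where
  "nonneg_span S = {\<Sum>v\<in>S. c v *\<^sub>R v | c. \<forall>v\<in>S. c v \<ge> 0}"

lemma rat_poly_cone_iff:
  "rat_poly_cone \<sigma> \<longleftrightarrow> (\<exists>S. finite S \<and> (\<forall>v\<in>S. lattice_pt v) \<and> \<sigma> = nonneg_span S)"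
  unfolding rat_poly_cone_def nonneg_span_def by simp

lemma zero_in_nonneg_span: "0 \<in> nonneg_span S"
  unfolding nonneg_span_def by (auto intro!: exI[of _ "\<lambda>_. 0"])

lemma generator_in_nonneg_span:
  assumes "finite S" "s \<in> S"
  shows "s \<in> nonneg_span S"
proof -
  have "(\<Sum>v\<in>S. (if v = s then 1 else 0) *\<^sub>R v) = s"
    using assms by (simp add: if_distrib[of "\<lambda>c. c *\<^sub>R _"] sum.delta' cong: if_cong)
  then show ?thesis
    unfolding nonneg_span_def by (intro CollectI exI[of _ "\<lambda>v. if v = s then 1 else 0"]) auto
qed

lemma nonneg_span_scaleR:
  assumes "x \<in> nonneg_span S" "t \<ge> 0"
  shows "t *\<^sub>R x \<in> nonneg_span S"
proof -
  obtain c where c: "\<forall>v\<in>S. c v \<ge> 0" "x = (\<Sum>v\<in>S. c v *\<^sub>R v)"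
    using assms(1) unfolding nonneg_span_def by auto
  have "t *\<^sub>R x = (\<Sum>v\<in>S. (t * c v) *\<^sub>R v)"
    using c by (simp add: scaleR_sum_right)
  then show ?thesis
    unfolding nonneg_span_def using c assms(2) by (intro CollectI exI[of _ "\<lambda>v. t * c v"]) auto
qed

lemma nonneg_span_add:
  assumes "x \<in> nonneg_span S" "y \<in> nonneg_span S"
  shows "x + y \<in> nonneg_span S"
proof -
  obtain c where c: "\<forall>v\<in>S. c v \<ge> 0" "x = (\<Sum>v\<in>S. c v *\<^sub>R v)"
    using assms(1) unfolding nonneg_span_def by auto
  obtain d where d: "\<forall>v\<in>S. d v \<ge> 0" "y = (\<Sum>v\<in>S. d v *\<^sub>R v)"
    using assms(2) unfolding nonneg_span_def by auto
  have "x + y = (\<Sum>v\<in>S. (c v + d v) *\<^sub>R v)"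
    using c d by (simp add: scaleR_add_left sum.distrib)
  then show ?thesis
    unfolding nonneg_span_def using c d by (intro CollectI exI[of _ "\<lambda>v. c v + d v"]) auto
qed

lemma nonneg_span_sum:
  "(\<And>i. i \<in> I \<Longrightarrow> f i \<in> nonneg_span S) \<Longrightarrow> sum f I \<in> nonneg_span S"
  by (induction I rule: infinite_finite_induct) (auto simp: zero_in_nonneg_span nonneg_span_add)

lemma nonneg_span_subset:
  assumes "finite Y" "Y \<subseteq> nonneg_span X"
  shows "nonneg_span Y \<subseteq> nonneg_span X"
proof
  fix x assume "x \<in> nonneg_span Y"
  then obtain c where "\<forall>v\<in>Y. c v \<ge> 0" "x = (\<Sum>v\<in>Y. c v *\<^sub>R v)"
    unfolding nonneg_span_def by auto
  then show "x \<in> nonneg_span X"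
    using assms(2) by (auto intro!: nonneg_span_sum nonneg_span_scaleR)
qed

lemma nonneg_span_remove_redundant:
  assumes "finite X" "s \<in> nonneg_span (X - {s})"
  shows "nonneg_span X = nonneg_span (X - {s})"
proof
  show "nonneg_span X \<subseteq> nonneg_span (X - {s})"
    using assms generator_in_nonneg_span[of "X - {s}"] by (intro nonneg_span_subset) auto
  show "nonneg_span (X - {s}) \<subseteq> nonneg_span X"
    using assms generator_in_nonneg_span[of X] by (intro nonneg_span_subset) auto
qed

definition halfline :: "'a::real_vector \<Rightarrow> 'a set" where
  "halfline s = {t *\<^sub>R s | t. t \<ge> 0}"

lemma mem_halfline: "x \<in> halfline s \<longleftrightarrow> (\<exists>t\<ge>0. x = t *\<^sub>R s)"
  unfolding halfline_def by auto

lemma halfline_self: "s \<in> halfline s"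
  unfolding mem_halfline by (intro exI[of _ 1]) auto

lemma halfline_scaleR:
  assumes "c > 0"
  shows "halfline (c *\<^sub>R s) = halfline s"
proof
  show "halfline s \<subseteq> halfline (c *\<^sub>R s)"
  proof
    fix x assume "x \<in> halfline s"
    then obtain t where "t \<ge> 0" "x = t *\<^sub>R s"
      unfolding mem_halfline by blast
    then show "x \<in> halfline (c *\<^sub>R s)"
      unfolding mem_halfline using assms by (intro exI[of _ "t / c"]) simp
  qed
  show "halfline (c *\<^sub>R s) \<subseteq> halfline s"
  proof
    fix x assume "x \<in> halfline (c *\<^sub>R s)"
    then obtain t where "t \<ge> 0" "x = t *\<^sub>R c *\<^sub>R s"
      unfolding mem_halfline by blast
    then show "x \<in> halfline s"
      unfolding mem_halfline using assms by (intro exI[of _ "t * c"]) simp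
  qed
qed

lemma convex_halfline: "convex (halfline s)"
proof -
  have "halfline s = (\<lambda>t. t *\<^sub>R s) ` {0..}"
    unfolding halfline_def by auto
  then show ?thesis
    by (simp add: convex_linear_image linear_scaleR_left)
qed

lemma aff_dim_halfline:
  fixes s :: "'a::euclidean_space"
  assumes "s \<noteq> 0"
  shows "aff_dim (halfline s) = 1"
proof -
  have "affine hull {0, s} = span {0, s}"
    by (simp add: affine_hull_span_0 hull_inc)
  then have "halfline s \<subseteq> affine hull {0, s}"
    by (auto simp: mem_halfline span_clauses)
  then have "affine hull halfline s \<subseteq> affine hull {0, s}"
    by (intro hull_minimal) (auto simp: affine_affine_hull)
  moreover have "{0, s} \<subseteq> halfline s"
    using halfline_self by (auto simp: mem_halfline intro: exI[of _ 0])
  then have "affine hull {0, s} \<subseteq> affine hull halfline s"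
    by (rule hull_mono)
  ultimately have "aff_dim (halfline s) = aff_dim {0, s}"
    by (intro aff_dim_affine_hull2) auto
  then show ?thesis
    using assms by simp
qed

lemma aff_dim_1_obtain_multiple:
  fixes S :: "'a::euclidean_space set"
  assumes dim: "aff_dim S = 1" and "0 \<in> S" "s \<in> S" "s \<noteq> 0" and x: "x \<in> S"
  obtains t where "x = t *\<^sub>R s"
proof -
  have "affine hull {0, s} \<subseteq> affine hull S"
    using assms by (intro hull_mono) auto
  moreover have "\<not> affine hull {0, s} \<subset> affine hull S"
  proof
    assume "affine hull {0, s} \<subset> affine hull S"
    then have "aff_dim {0, s} < aff_dim S"
      by (rule aff_dim_psubset)
    then show False
      using dim \<open>s \<noteq> 0\<close> by simp
  qed
  ultimately have "x \<in> affine hull {0, s}"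
    using hull_inc[OF x, of affine] by blast
  then show ?thesis
    using that unfolding affine_hull_2 by force
qed

lemma nonneg_span_aff_dim_1_eq_halfline:
  fixes S :: "(real^'n) set"
  assumes fin: "finite S" and sc: "strongly_convex (nonneg_span S)"
    and dim: "aff_dim (nonneg_span S) = 1"
  shows "\<exists>s\<in>S. s \<noteq> 0 \<and> nonneg_span S = halfline s"
proof -
  let ?\<sigma> = "nonneg_span S"
  obtain s where s: "s \<in> S" "s \<noteq> 0"
  proof (rule ccontr)
    assume "\<not> thesis"
    then have "\<forall>s\<in>S. s = 0"
      using that by blast
    then have "?\<sigma> = {0}"
      unfolding nonneg_span_def by (auto intro!: sum.neutral exI[of _ "\<lambda>_. 0"])
    then show False
      using dim by simp
  qed
  have s_in: "s \<in> ?\<sigma>"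
    using generator_in_nonneg_span[OF fin s(1)] .
  have "x \<in> halfline s" if x: "x \<in> ?\<sigma>" for x
  proof -
    obtain t where t: "x = t *\<^sub>R s"
      using aff_dim_1_obtain_multiple[OF dim zero_in_nonneg_span s_in s(2) x] .
    have "t \<ge> 0"
    proof (rule ccontr)
      assume "\<not> t \<ge> 0"
      then have "- s \<in> ?\<sigma>"
        using nonneg_span_scaleR[OF x, of "-1/t"] t by simp
      then have "s \<in> ?\<sigma> \<inter> uminus ` ?\<sigma>"
        using s_in by (auto intro: image_eqI[of _ _ "- s"])
      then show False
        using sc s(2) unfolding strongly_convex_def by auto
    qed
    then show ?thesis
      using t by (auto simp: mem_halfline)
  qed
  moreover have "halfline s \<subseteq> ?\<sigma>"
    using s_in nonneg_span_scaleR by (auto simp: mem_halfline)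
  ultimately show ?thesis
    using s by blast
qed

lemma pointed_cone_sum_eq_0:
  fixes f :: "'i \<Rightarrow> 'a::ab_group_add"
  assumes pointed: "K \<inter> uminus ` K \<subseteq> {0}" and add: "\<And>x y. x \<in> K \<Longrightarrow> y \<in> K \<Longrightarrow> x + y \<in> K"
    and zero: "0 \<in> K" and fin: "finite I" and f: "\<And>i. i \<in> I \<Longrightarrow> f i \<in> K"
    and sum0: "sum f I = 0" and j: "j \<in> I"
  shows "f j = 0"
proof -
  have "sum f J \<in> K" if "J \<subseteq> I" for J
    using finite_subset[OF that fin] that by (induction J rule: finite_induct) (auto simp: zero add f)
  then have "- f j \<in> K"
    using sum0 fin j by (metis Diff_subset add.commute add_diff_cancel eq_neg_iff_add_eq_0 sum.remove)
  then show ?thesis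
    using pointed f[OF j] by (metis IntI image_eqI minus_minus singletonD subsetD)
qed

lemma nonneg_comb_in_halfline:
  fixes S :: "'a::real_vector set"
  assumes fin: "finite S" and pointed: "nonneg_span S \<inter> uminus ` nonneg_span S \<subseteq> {0}"
    and irr: "\<And>s. s \<in> S \<Longrightarrow> s \<notin> nonneg_span (S - {s})"
    and s: "s \<in> S" and \<gamma>: "\<forall>v\<in>S. \<gamma> v \<ge> 0" and x: "(\<Sum>v\<in>S. \<gamma> v *\<^sub>R v) \<in> halfline s"
  shows "\<forall>v\<in>S - {s}. \<gamma> v = 0"
proof -
  define p where "p = (\<Sum>v\<in>S - {s}. \<gamma> v *\<^sub>R v)"
  obtain t where t: "\<gamma> s *\<^sub>R s + p = t *\<^sub>R s"
    using x fin s unfolding p_def mem_halfline by (auto simp: sum.remove)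
  have p_in: "p \<in> nonneg_span (S - {s})"
    unfolding p_def using fin \<gamma> by (intro nonneg_span_sum nonneg_span_scaleR generator_in_nonneg_span) auto
  \<comment> \<open>Since s is not redundant, p is not a positive multiple of s.\<close>
  have "t \<le> \<gamma> s"
  proof (rule ccontr)
    assume "\<not> t \<le> \<gamma> s"
    moreover have "p = (t - \<gamma> s) *\<^sub>R s"
      using t by (simp add: algebra_simps)
    ultimately have "s = (1 / (t - \<gamma> s)) *\<^sub>R p"
      by simp
    then have "s \<in> nonneg_span (S - {s})"
      using nonneg_span_scaleR[OF p_in, of "1 / (t - \<gamma> s)"] \<open>\<not> t \<le> \<gamma> s\<close> by simp
    then show False
      using irr s by blast
  qed
  define \<gamma>' where "\<gamma>' v = (if v = s then \<gamma> s - t else \<gamma> v)" for v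
  have terms: "\<gamma>' v *\<^sub>R v \<in> nonneg_span S" if "v \<in> S" for v
    using that fin \<gamma> \<open>t \<le> \<gamma> s\<close> unfolding \<gamma>'_def
    by (intro nonneg_span_scaleR generator_in_nonneg_span) auto
  have "(\<Sum>v\<in>S - {s}. \<gamma>' v *\<^sub>R v) = p"
    unfolding p_def \<gamma>'_def by (rule sum.cong) auto
  then have "(\<Sum>v\<in>S. \<gamma>' v *\<^sub>R v) = (\<gamma> s - t) *\<^sub>R s + p"
    using fin s by (simp add: sum.remove) (simp add: \<gamma>'_def)
  then have sum0: "(\<Sum>v\<in>S. \<gamma>' v *\<^sub>R v) = 0"
    using t by (simp add: algebra_simps)
  show ?thesis
  proof
    fix v assume v: "v \<in> S - {s}"
    have "\<gamma>' v *\<^sub>R v = 0"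
      by (rule pointed_cone_sum_eq_0[where K = "nonneg_span S" and f = "\<lambda>v. \<gamma>' v *\<^sub>R v" and I = S])
        (use pointed nonneg_span_add zero_in_nonneg_span fin terms sum0 v in auto)
    moreover have "v \<noteq> 0"
      using irr v zero_in_nonneg_span by blast
    ultimately show "\<gamma> v = 0"
      using v unfolding \<gamma>'_def by simp
  qed
qed

lemma halfline_face_of_nonneg_span:
  fixes S :: "'a::real_vector set"
  assumes fin: "finite S" and pointed: "nonneg_span S \<inter> uminus ` nonneg_span S \<subseteq> {0}"
    and irr: "\<And>s. s \<in> S \<Longrightarrow> s \<notin> nonneg_span (S - {s})" and s: "s \<in> S"
  shows "halfline s face_of nonneg_span S"
proof -
  let ?\<sigma> = "nonneg_span S"
  have "halfline s \<subseteq> ?\<sigma>"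
    using generator_in_nonneg_span[OF fin s] nonneg_span_scaleR by (auto simp: mem_halfline)
  moreover have "a \<in> halfline s \<and> b \<in> halfline s"
    if a: "a \<in> ?\<sigma>" and b: "b \<in> ?\<sigma>" and x: "x \<in> halfline s" and seg: "x \<in> open_segment a b" for a b x
  proof -
    obtain u where u: "0 < u" "u < 1" "x = (1 - u) *\<^sub>R a + u *\<^sub>R b"
      using seg in_segment(2) by blast
    obtain \<alpha> where \<alpha>: "\<forall>v\<in>S. \<alpha> v \<ge> 0" "a = (\<Sum>v\<in>S. \<alpha> v *\<^sub>R v)"
      using a unfolding nonneg_span_def by auto
    obtain \<beta> where \<beta>: "\<forall>v\<in>S. \<beta> v \<ge> 0" "b = (\<Sum>v\<in>S. \<beta> v *\<^sub>R v)"
      using b unfolding nonneg_span_def by auto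
    define \<gamma> where "\<gamma> v = (1 - u) * \<alpha> v + u * \<beta> v" for v
    have "x = (\<Sum>v\<in>S. \<gamma> v *\<^sub>R v)"
      unfolding u(3) \<alpha>(2) \<beta>(2) \<gamma>_def by (simp add: scaleR_sum_right scaleR_add_left sum.distrib)
    then have "\<forall>v\<in>S - {s}. \<gamma> v = 0"
      using \<alpha>(1) \<beta>(1) u x unfolding \<gamma>_def
      by (intro nonneg_comb_in_halfline[OF fin pointed irr s]) auto
    then have "\<forall>v\<in>S - {s}. \<alpha> v = 0 \<and> \<beta> v = 0"
      using \<alpha>(1) \<beta>(1) u unfolding \<gamma>_def
      by (smt (verit, best) Diff_iff mult_eq_0_iff mult_nonneg_nonneg)
    then have "a = \<alpha> s *\<^sub>R s" "b = \<beta> s *\<^sub>R s"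
      unfolding \<alpha>(2) \<beta>(2) using fin s by (simp_all add: sum.remove)
    then show ?thesis
      using \<alpha>(1) \<beta>(1) s by (auto simp: mem_halfline)
  qed
  ultimately show ?thesis
    unfolding face_of_def using convex_halfline by blast
qed

lemma irredundant_generators:
  assumes "finite S"
  obtains S0 where "S0 \<subseteq> S" "nonneg_span S0 = nonneg_span S"
    "\<And>s. s \<in> S0 \<Longrightarrow> s \<notin> nonneg_span (S0 - {s})"
proof -
  define Q where "Q X \<longleftrightarrow> X \<subseteq> S \<and> nonneg_span X = nonneg_span S" for X
  obtain S0 where "Q S0" and min: "\<And>Y. Q Y \<Longrightarrow> card S0 \<le> card Y"
    using ex_has_least_nat[of Q S card] unfolding Q_def by blast
  then have S0: "S0 \<subseteq> S" "nonneg_span S0 = nonneg_span S" and fin: "finite S0"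
    unfolding Q_def using assms finite_subset by auto
  have "s \<notin> nonneg_span (S0 - {s})" if s: "s \<in> S0" for s
  proof
    assume "s \<in> nonneg_span (S0 - {s})"
    then have "Q (S0 - {s})"
      using nonneg_span_remove_redundant[OF fin] S0 unfolding Q_def by auto
    then have "card S0 \<le> card (S0 - {s})"
      by (rule min)
    moreover have "card (S0 - {s}) < card S0"
      using fin s by (rule card_Diff1_less)
    ultimately show False
      by simp
  qed
  then show ?thesis
    using that S0 by blast
qed

section \<open>Rays of a fan and their primitive generators\<close>

lemma fan_cone:
  "is_fan \<Sigma> \<Longrightarrow> \<sigma> \<in> \<Sigma> \<Longrightarrow> rat_poly_cone \<sigma> \<and> strongly_convex \<sigma>"
  unfolding is_fan_def by blast

lemma fan_face:
  "is_fan \<Sigma> \<Longrightarrow> \<sigma> \<in> \<Sigma> \<Longrightarrow> \<tau> face_of \<sigma> \<Longrightarrow> \<tau> \<noteq> {} \<Longrightarrow> \<tau> \<in> \<Sigma>"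
  unfolding is_fan_def by blast

lemma finite_fan: "is_fan \<Sigma> \<Longrightarrow> finite \<Sigma>"
  unfolding is_fan_def by blast

lemma finite_cone_rays: "is_fan \<Sigma> \<Longrightarrow> finite (cone_rays \<Sigma> \<sigma>)"
  unfolding cone_rays_def rays_def by (auto dest: finite_fan)

lemma ray_eq_halfline:
  assumes fan: "is_fan \<Sigma>" and ray: "\<rho> \<in> rays \<Sigma>"
  shows "\<exists>s. lattice_pt s \<and> s \<noteq> 0 \<and> \<rho> = halfline s"
proof -
  have \<rho>: "\<rho> \<in> \<Sigma>" "aff_dim \<rho> = 1"
    using ray unfolding rays_def by auto
  obtain S where S: "finite S" "\<forall>v\<in>S. lattice_pt v" "\<rho> = nonneg_span S"
    using fan_cone[OF fan \<rho>(1)] unfolding rat_poly_cone_iff by blast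
  then obtain s where "s \<in> S" "s \<noteq> 0" "\<rho> = halfline s"
    using nonneg_span_aff_dim_1_eq_halfline[of S] \<rho>(2) fan_cone[OF fan \<rho>(1)] by auto
  then show ?thesis
    using S(2) by blast
qed

lemma lattice_pt_diff: "lattice_pt x \<Longrightarrow> lattice_pt y \<Longrightarrow> lattice_pt (x - y)"
  unfolding lattice_pt_def by (auto intro: Ints_diff)

lemma lattice_pt_scaleR_int: "lattice_pt x \<Longrightarrow> lattice_pt (of_int k *\<^sub>R x)"
  unfolding lattice_pt_def by (auto intro: Ints_mult)

lemma lattice_multiple_denominator:
  fixes s :: "real^'n"
  assumes "s $ i = of_int z" "t \<ge> 0" "lattice_pt (t *\<^sub>R s)"
  obtains j :: nat where "t * real (nat \<bar>z\<bar>) = real j"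
proof -
  have "(t *\<^sub>R s) $ i \<in> \<int>"
    using assms(3) unfolding lattice_pt_def by blast
  then have "\<bar>t * of_int z\<bar> \<in> \<int>"
    using assms(1) by simp
  then obtain m :: int where m: "t * real (nat \<bar>z\<bar>) = of_int m"
    using assms(2) by (auto simp: abs_mult elim!: Ints_cases)
  moreover have "m \<ge> 0"
    using m assms(2) by (metis of_int_0_le_iff mult_nonneg_nonneg of_nat_0_le_iff)
  ultimately show ?thesis
    using that[of "nat m"] by simp
qed

lemma least_lattice_multiple_dvd:
  fixes s :: "real^'n" and N :: real
  assumes k0: "k0 > 0" "lattice_pt ((real k0 / N) *\<^sub>R s)"
    and least: "\<And>k. 0 < k \<Longrightarrow> k < k0 \<Longrightarrow> \<not> lattice_pt ((real k / N) *\<^sub>R s)"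
    and j: "lattice_pt ((real j / N) *\<^sub>R s)"
  shows "k0 dvd j"
proof -
  define q where "q = j div k0"
  define r where "r = j mod k0"
  have "real j = real q * real k0 + real r"
    unfolding q_def r_def by (metis div_mult_mod_eq of_nat_add of_nat_mult)
  then have "(real r / N) *\<^sub>R s = (real j / N) *\<^sub>R s - of_int (int q) *\<^sub>R ((real k0 / N) *\<^sub>R s)"
    by (simp add: algebra_simps add_divide_distrib)
  then have "lattice_pt ((real r / N) *\<^sub>R s)"
    using j k0(2) by (simp only: lattice_pt_diff lattice_pt_scaleR_int)
  moreover have "r < k0"
    unfolding r_def using k0(1) by simp
  ultimately have "r = 0"
    using least by blast
  then show ?thesis
    unfolding r_def by auto
qed

lemma lattice_halfline_generator:
  fixes s :: "real^'n"
  assumes ls: "lattice_pt s" and s0: "s \<noteq> 0"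
  obtains v where "lattice_pt v" "v \<noteq> 0" "halfline v = halfline s"
    "\<And>w. w \<in> halfline s \<Longrightarrow> lattice_pt w \<Longrightarrow> \<exists>k::int. w = of_int k *\<^sub>R v"
proof -
  obtain i where si: "s $ i \<noteq> 0"
    using s0 by (auto simp: vec_eq_iff)
  obtain z :: int where z: "s $ i = of_int z"
    using ls unfolding lattice_pt_def by (metis Ints_cases)
  define N where "N = nat \<bar>z\<bar>"
  have N0: "N > 0"
    using si z unfolding N_def by auto
  \<comment> \<open>Lattice points of the half-line are among the multiples of s by (1/N) \<nat>; take the least one.\<close>
  define P where "P k \<longleftrightarrow> k > 0 \<and> lattice_pt ((real k / real N) *\<^sub>R s)" for k :: nat
  have "P N"
    using N0 ls unfolding P_def by simp
  define k0 where "k0 = (LEAST k. P k)"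
  have "P k0"
    unfolding k0_def using \<open>P N\<close> by (rule LeastI)
  then have k0: "k0 > 0" "lattice_pt ((real k0 / real N) *\<^sub>R s)"
    unfolding P_def by auto
  have least: "\<not> lattice_pt ((real k / real N) *\<^sub>R s)" if "0 < k" "k < k0" for k
    using not_less_Least[of k P] that unfolding k0_def P_def by blast
  define v where "v = (real k0 / real N) *\<^sub>R s"
  have "halfline v = halfline s"
    unfolding v_def using k0 N0 by (intro halfline_scaleR) simp
  moreover have "\<exists>k::int. w = of_int k *\<^sub>R v"
    if w: "w \<in> halfline s" "lattice_pt w" for w
  proof -
    obtain t where t: "t \<ge> 0" "w = t *\<^sub>R s"
      using w(1) unfolding mem_halfline by blast
    then obtain j :: nat where j: "t * real N = real j"
      using lattice_multiple_denominator[OF z] w(2) unfolding N_def by blast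
    then have w_eq: "w = (real j / real N) *\<^sub>R s"
      using t N0 by (simp add: field_simps)
    then obtain q where "j = k0 * q"
      using least_lattice_multiple_dvd[OF k0 least] w(2) by blast
    then have "w = of_int (int q) *\<^sub>R v"
      unfolding w_eq v_def by simp
    then show ?thesis ..
  qed
  moreover have "v \<noteq> 0"
    unfolding v_def using k0 N0 s0 by auto
  ultimately show ?thesis
    using that k0(2) v_def by blast
qed

lemma prim_gen_eqI:
  fixes v :: "real^'n"
  assumes \<rho>: "\<rho> = halfline v" and v: "lattice_pt v" "v \<noteq> 0"
    and gen: "\<forall>w\<in>\<rho>. lattice_pt w \<longrightarrow> (\<exists>k::int. w = of_int k *\<^sub>R v)"
  shows "prim_gen \<rho> = v"
  unfolding prim_gen_def
proof (rule the_equality)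
  show "v \<in> \<rho> \<and> lattice_pt v \<and> v \<noteq> 0 \<and> (\<forall>w\<in>\<rho>. lattice_pt w \<longrightarrow> (\<exists>k::int. w = of_int k *\<^sub>R v))"
    using \<rho> halfline_self[of v] v gen by blast
next
  fix v' assume v': "v' \<in> \<rho> \<and> lattice_pt v' \<and> v' \<noteq> 0 \<and> (\<forall>w\<in>\<rho>. lattice_pt w \<longrightarrow> (\<exists>k::int. w = of_int k *\<^sub>R v'))"
  obtain k :: int where k: "v' = of_int k *\<^sub>R v"
    using gen v' by blast
  have "v \<in> \<rho>"
    unfolding \<rho> by (rule halfline_self)
  then obtain k' :: int where k': "v = of_int k' *\<^sub>R v'"
    using v' v(1) by blast
  have "v' \<in> halfline v"
    using v' \<rho> by simp
  then obtain t where t: "t \<ge> 0" "v' = t *\<^sub>R v"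
    unfolding mem_halfline by blast
  \<comment> \<open>Both generate the lattice points of the ray, so they differ by a unit; positivity rules out -1.\<close>
  have "k \<ge> 0"
    using k t v(2) by auto
  moreover have "v = of_int k' *\<^sub>R of_int k *\<^sub>R v"
    using k' unfolding k .
  then have "of_int (k' * k) *\<^sub>R v = 1 *\<^sub>R v"
    by simp
  then have "k' * k = 1"
    using v(2) by (metis of_int_eq_1_iff scaleR_cancel_right)
  ultimately have "k = 1"
    by (simp add: zmult_eq_1_iff)
  then show "v' = v"
    using k by simp
qed

lemma prim_gen_ray:
  assumes "is_fan \<Sigma>" "\<rho> \<in> rays \<Sigma>"
  shows "lattice_pt (prim_gen \<rho>)" "prim_gen \<rho> \<noteq> 0" "\<rho> = halfline (prim_gen \<rho>)"
proof -
  obtain s where s: "lattice_pt s" "s \<noteq> 0" "\<rho> = halfline s"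
    using ray_eq_halfline[OF assms] by blast
  obtain v where v: "lattice_pt v" "v \<noteq> 0" "halfline v = halfline s"
    "\<And>w. w \<in> halfline s \<Longrightarrow> lattice_pt w \<Longrightarrow> \<exists>k::int. w = of_int k *\<^sub>R v"
    using lattice_halfline_generator[OF s(1,2)] by blast
  have "prim_gen \<rho> = v"
    using v s(3) by (intro prim_gen_eqI) auto
  then show "lattice_pt (prim_gen \<rho>)" "prim_gen \<rho> \<noteq> 0" "\<rho> = halfline (prim_gen \<rho>)"
    using v s(3) by auto
qed

lemma cone_subset_span_prim_gen:
  assumes fan: "is_fan \<Sigma>" and \<sigma>: "\<sigma> \<in> \<Sigma>"
  shows "\<sigma> \<subseteq> nonneg_span (prim_gen ` cone_rays \<Sigma> \<sigma>)"
proof -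
  obtain S where S: "finite S" "\<sigma> = nonneg_span S"
    using fan_cone[OF fan \<sigma>] unfolding rat_poly_cone_iff by blast
  obtain S0 where S0: "S0 \<subseteq> S" "nonneg_span S0 = \<sigma>" and irr: "\<And>s. s \<in> S0 \<Longrightarrow> s \<notin> nonneg_span (S0 - {s})"
    using irredundant_generators[OF S(1)] S(2) by metis
  have fin: "finite S0"
    using S(1) S0(1) finite_subset by blast
  have pointed: "nonneg_span S0 \<inter> uminus ` nonneg_span S0 \<subseteq> {0}"
    using fan_cone[OF fan \<sigma>] S0(2) unfolding strongly_convex_def by blast
  have fin_rays: "finite (cone_rays \<Sigma> \<sigma>)"
    using finite_cone_rays[OF fan] .
  have "s \<in> nonneg_span (prim_gen ` cone_rays \<Sigma> \<sigma>)" if s: "s \<in> S0" for s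
  proof -
    have face: "halfline s face_of \<sigma>"
      using halfline_face_of_nonneg_span[OF fin pointed irr s] S0(2) by simp
    have "s \<noteq> 0"
      using irr[OF s] zero_in_nonneg_span by blast
    moreover have "halfline s \<noteq> {}"
      using halfline_self by blast
    ultimately have "halfline s \<in> rays \<Sigma>"
      using fan_face[OF fan \<sigma> face] aff_dim_halfline unfolding rays_def by blast
    then have ray: "halfline s \<in> cone_rays \<Sigma> \<sigma>"
      using face_of_imp_subset[OF face] unfolding cone_rays_def by blast
    then have "s \<in> halfline (prim_gen (halfline s))"
      using prim_gen_ray(3)[OF fan] halfline_self[of s] unfolding cone_rays_def by auto
    then obtain t where t: "t \<ge> 0" "s = t *\<^sub>R prim_gen (halfline s)"
      unfolding mem_halfline by blast
    have "prim_gen (halfline s) \<in> nonneg_span (prim_gen ` cone_rays \<Sigma> \<sigma>)"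
      using ray fin_rays by (intro generator_in_nonneg_span) auto
    then show ?thesis
      by (subst t(2)) (rule nonneg_span_scaleR[OF _ t(1)])
  qed
  then show ?thesis
    using nonneg_span_subset[OF fin] S0(2) by blast
qed

lemma inj_on_prim_gen_rays:
  assumes "is_fan \<Sigma>"
  shows "inj_on prim_gen (rays \<Sigma>)"
  using prim_gen_ray(3)[OF assms] by (metis inj_onI)

lemma mem_cone_eq_ray_comb:
  assumes fan: "is_fan \<Sigma>" and \<sigma>: "\<sigma> \<in> \<Sigma>" and w: "w \<in> \<sigma>"
  obtains c where "\<forall>\<rho>\<in>cone_rays \<Sigma> \<sigma>. c \<rho> \<ge> 0" "w = (\<Sum>\<rho>\<in>cone_rays \<Sigma> \<sigma>. c \<rho> *\<^sub>R prim_gen \<rho>)"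
proof -
  obtain d where d: "\<forall>u\<in>prim_gen ` cone_rays \<Sigma> \<sigma>. d u \<ge> 0"
    "w = (\<Sum>u\<in>prim_gen ` cone_rays \<Sigma> \<sigma>. d u *\<^sub>R u)"
    using cone_subset_span_prim_gen[OF fan \<sigma>] w unfolding nonneg_span_def by blast
  have "inj_on prim_gen (cone_rays \<Sigma> \<sigma>)"
    using inj_on_prim_gen_rays[OF fan] unfolding cone_rays_def by (rule inj_on_subset) auto
  then have "w = (\<Sum>\<rho>\<in>cone_rays \<Sigma> \<sigma>. d (prim_gen \<rho>) *\<^sub>R prim_gen \<rho>)"
    using d(2) by (simp add: sum.reindex)
  then show ?thesis
    using that[of "d \<circ> prim_gen"] d(1) by auto
qed

section \<open>Ample divisors and the unstable locus\<close>

lemma complete_fan_maximal_cone: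
  assumes "complete_fan \<Sigma>"
  obtains \<tau> where "\<tau> \<in> maximal_cones \<Sigma>" "w \<in> \<tau>"
proof -
  have fan: "is_fan \<Sigma>" and "\<Union>\<Sigma> = UNIV"
    using assms unfolding complete_fan_def by auto
  then obtain \<sigma> where \<sigma>: "\<sigma> \<in> \<Sigma>" "w \<in> \<sigma>"
    by blast
  obtain \<tau> where "\<tau> \<in> {t\<in>\<Sigma>. \<sigma> \<subseteq> t}" "\<forall>t\<in>{t\<in>\<Sigma>. \<sigma> \<subseteq> t}. \<tau> \<subseteq> t \<longrightarrow> \<tau> = t"
    using finite_has_maximal[of "{t\<in>\<Sigma>. \<sigma> \<subseteq> t}"] finite_fan[OF fan] \<sigma>(1) by auto
  then have "\<tau> \<in> maximal_cones \<Sigma>" "w \<in> \<tau>"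
    unfolding maximal_cones_def using \<sigma> by auto
  then show ?thesis
    using that by blast
qed

lemma sum_indicator_diff:
  fixes f :: "'r \<Rightarrow> real"
  assumes "finite R" "T \<subseteq> R" "C \<subseteq> R"
  shows "(\<Sum>\<rho>\<in>R. ((if \<rho> \<in> T then c \<rho> else 0) - (if \<rho> \<in> C then 1 else 0)) * f \<rho>)
    = (\<Sum>\<rho>\<in>T. c \<rho> * f \<rho>) - sum f C"
  using assms
  by (simp add: left_diff_distrib sum_subtractf if_distrib[of "\<lambda>c. c * _"] Int_absorb1
      flip: sum.inter_restrict cong: if_cong)

lemma ample_div_strict_convexity:
  assumes amp: "ample_div \<Sigma> a" and \<tau>: "\<tau> \<in> maximal_cones \<Sigma>"
    and fin: "finite C" and C: "C \<subseteq> rays \<Sigma>" "\<not> C \<subseteq> cone_rays \<Sigma> \<tau>"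
    and comb: "(\<Sum>\<rho>\<in>C. prim_gen \<rho>) = (\<Sum>\<rho>\<in>cone_rays \<Sigma> \<tau>. c \<rho> *\<^sub>R prim_gen \<rho>)"
  shows "(\<Sum>\<rho>\<in>cone_rays \<Sigma> \<tau>. c \<rho> * a \<rho>) < sum a C"
proof -
  let ?T = "cone_rays \<Sigma> \<tau>"
  obtain m where m_eq: "\<forall>\<rho>\<in>?T. inner m (prim_gen \<rho>) = - a \<rho>"
    and m_gt: "\<forall>\<rho>\<in>rays \<Sigma> - ?T. inner m (prim_gen \<rho>) > - a \<rho>"
    using amp \<tau> unfolding ample_div_def by blast
  have "(\<Sum>\<rho>\<in>?T. c \<rho> * a \<rho>) = - inner m (\<Sum>\<rho>\<in>C. prim_gen \<rho>)"
    unfolding comb using m_eq by (simp add: inner_sum_right sum_negf[symmetric])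
  also have "\<dots> = - (\<Sum>\<rho>\<in>C. inner m (prim_gen \<rho>))"
    by (simp add: inner_sum_right)
  also have "\<dots> < sum a C"
  proof -
    obtain \<rho>0 where \<rho>0: "\<rho>0 \<in> C" "\<rho>0 \<notin> ?T"
      using C(2) by blast
    have "- inner m (prim_gen \<rho>) \<le> a \<rho>" if "\<rho> \<in> C" for \<rho>
    proof (cases "\<rho> \<in> ?T")
      case False
      then have "- a \<rho> < inner m (prim_gen \<rho>)"
        using m_gt C(1) that by blast
      then show ?thesis
        by linarith
    qed (use m_eq in simp)
    moreover have "- a \<rho>0 < inner m (prim_gen \<rho>0)"
      using m_gt C(1) \<rho>0 by blast
    then have "- inner m (prim_gen \<rho>0) < a \<rho>0"
      by linarith
    ultimately have "(\<Sum>\<rho>\<in>C. - inner m (prim_gen \<rho>)) < sum a C"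
      using sum_strict_mono_ex1[OF fin, of "\<lambda>\<rho>. - inner m (prim_gen \<rho>)" a] \<rho>0(1) by blast
    then show ?thesis
      by (simp add: sum_negf)
  qed
  finally show ?thesis .
qed

lemma ample_pairing_neg:
  assumes cf: "complete_fan \<Sigma>" and amp: "ample_div \<Sigma> a" and x: "x \<in> Zlocus \<Sigma>"
  shows "\<exists>v\<in>sigma_x \<Sigma> x. pairing \<Sigma> a v < 0"
proof -
  have fan: "is_fan \<Sigma>"
    using cf unfolding complete_fan_def by auto
  let ?R = "rays \<Sigma>"
  have finR: "finite ?R"
    using finite_fan[OF fan] unfolding rays_def by auto
  obtain C where pc: "primitive_collection \<Sigma> C" and xC: "\<forall>\<rho>\<in>C. x \<rho> = 0"
    using x unfolding Zlocus_def by auto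
  have CR: "C \<subseteq> ?R" and not_cone: "\<forall>\<sigma>\<in>\<Sigma>. \<not> C \<subseteq> cone_rays \<Sigma> \<sigma>"
    using pc unfolding primitive_collection_def by auto
  obtain \<tau> where \<tau>: "\<tau> \<in> maximal_cones \<Sigma>" "(\<Sum>\<rho>\<in>C. prim_gen \<rho>) \<in> \<tau>"
    using complete_fan_maximal_cone[OF cf] by blast
  define T where "T = cone_rays \<Sigma> \<tau>"
  have TR: "T \<subseteq> ?R" and "\<tau> \<in> \<Sigma>"
    using \<tau>(1) unfolding T_def cone_rays_def maximal_cones_def by auto
  obtain c where c: "\<forall>\<rho>\<in>T. c \<rho> \<ge> 0" and comb: "(\<Sum>\<rho>\<in>C. prim_gen \<rho>) = (\<Sum>\<rho>\<in>T. c \<rho> *\<^sub>R prim_gen \<rho>)"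
    using mem_cone_eq_ray_comb[OF fan \<open>\<tau> \<in> \<Sigma>\<close> \<tau>(2)] unfolding T_def by blast
  \<comment> \<open>The relation v: the sum of the generators of C, written in \<tau>, minus those generators.\<close>
  define v where "v \<rho> = (if \<rho> \<in> ?R then (if \<rho> \<in> T then c \<rho> else 0) - (if \<rho> \<in> C then 1 else 0) else 0)" for \<rho>
  have sum_v: "(\<Sum>\<rho>\<in>?R. v \<rho> * f \<rho>) = (\<Sum>\<rho>\<in>T. c \<rho> * f \<rho>) - sum f C" for f
    unfolding v_def using sum_indicator_diff[OF finR TR CR] by simp
  have "(\<Sum>\<rho>\<in>?R. v \<rho> *\<^sub>R prim_gen \<rho>) $ i = 0" for i
    using sum_v[of "\<lambda>\<rho>. prim_gen \<rho> $ i"] arg_cong[OF comb, of "\<lambda>w. w $ i"] by (simp add: sum_component)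
  then have "v \<in> sigma_x \<Sigma> x"
    unfolding sigma_x_def GammaR_def using c xC by (auto simp: v_def vec_eq_iff)
  moreover have "pairing \<Sigma> a v < 0"
    using sum_v[of a] ample_div_strict_convexity[OF amp \<tau>(1) finite_subset[OF CR finR] CR, of c] comb not_cone
      \<open>\<tau> \<in> \<Sigma>\<close> unfolding pairing_def T_def by (simp add: mult.commute)
  ultimately show ?thesis
    by blast
qed

section \<open>The minimizing vector\<close>

lemma continuous_on_pairing: "continuous_on UNIV (pairing \<Sigma> a)"
  unfolding pairing_def by (intro continuous_intros continuous_on_product_coordinates)

lemma continuous_on_vnorm: "continuous_on UNIV (vnorm \<Sigma>)"
  unfolding vnorm_def by (intro continuous_intros continuous_on_product_coordinates)

lemma pairing_scale: "pairing \<Sigma> a (\<lambda>\<rho>. t * v \<rho>) = t * pairing \<Sigma> a v"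
  unfolding pairing_def by (simp add: sum_distrib_left mult.left_commute)

lemma pairing_add: "pairing \<Sigma> a (\<lambda>\<rho>. v \<rho> + w \<rho>) = pairing \<Sigma> a v + pairing \<Sigma> a w"
  unfolding pairing_def by (simp add: distrib_left sum.distrib)

lemma vnorm_nonneg: "vnorm \<Sigma> v \<ge> 0"
  unfolding vnorm_def by (simp add: sum_nonneg)

lemma vnorm_scale: "vnorm \<Sigma> (\<lambda>\<rho>. t * v \<rho>) = \<bar>t\<bar> * vnorm \<Sigma> v"
  unfolding vnorm_def by (simp add: power_mult_distrib real_sqrt_mult flip: sum_distrib_left)

lemma vnorm_eq_0_iff:
  assumes "finite (rays \<Sigma>)" "\<And>\<rho>. \<rho> \<notin> rays \<Sigma> \<Longrightarrow> v \<rho> = 0"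
  shows "vnorm \<Sigma> v = 0 \<longleftrightarrow> v = (\<lambda>_. 0)"
  using assms unfolding vnorm_def by (auto simp: sum_nonneg_eq_0_iff fun_eq_iff)

lemma vnorm_power2: "(vnorm \<Sigma> v)\<^sup>2 = (\<Sum>\<rho>\<in>rays \<Sigma>. (v \<rho>)\<^sup>2)"
  unfolding vnorm_def by (simp add: sum_nonneg)

lemma vnorm_parallelogram:
  "(vnorm \<Sigma> (\<lambda>\<rho>. v \<rho> + w \<rho>))\<^sup>2 + (vnorm \<Sigma> (\<lambda>\<rho>. v \<rho> - w \<rho>))\<^sup>2
     = 2 * (vnorm \<Sigma> v)\<^sup>2 + 2 * (vnorm \<Sigma> w)\<^sup>2"
proof -
  have "(v \<rho> + w \<rho>)\<^sup>2 + (v \<rho> - w \<rho>)\<^sup>2 = 2 * (v \<rho>)\<^sup>2 + 2 * (w \<rho>)\<^sup>2" for \<rho>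
    by (simp add: power2_eq_square algebra_simps)
  then show ?thesis
    unfolding vnorm_power2 by (simp add: sum_distrib_left flip: sum.distrib)
qed

lemma compact_box:
  fixes F :: "'r \<Rightarrow> real set"
  assumes "\<And>\<rho>. compact (F \<rho>)"
  shows "compact {v :: 'r \<Rightarrow> real. \<forall>\<rho>. v \<rho> \<in> F \<rho>}"
proof -
  have "{v :: 'r \<Rightarrow> real. \<forall>\<rho>. v \<rho> \<in> F \<rho>} = PiE UNIV F"
    by (auto simp: PiE_def Pi_def)
  moreover have "compactin (product_topology (\<lambda>i. euclidean) UNIV) (PiE UNIV F)"
    using assms by (simp add: compactin_PiE)
  ultimately show ?thesis
    by (simp add: euclidean_product_topology)
qed

locale ratio_minimization =
  fixes \<Sigma> :: "(real^'n) set set" and a :: "(real^'n) set \<Rightarrow> real"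
    and K :: "((real^'n) set \<Rightarrow> real) set"
  assumes finite_rays: "finite (rays \<Sigma>)"
    and K_supp: "\<And>v \<rho>. v \<in> K \<Longrightarrow> \<rho> \<notin> rays \<Sigma> \<Longrightarrow> v \<rho> = 0"
    and K_add: "\<And>v w. v \<in> K \<Longrightarrow> w \<in> K \<Longrightarrow> (\<lambda>\<rho>. v \<rho> + w \<rho>) \<in> K"
    and K_scale: "\<And>v t. v \<in> K \<Longrightarrow> t \<ge> 0 \<Longrightarrow> (\<lambda>\<rho>. t * v \<rho>) \<in> K"
    and K_closed: "closed K"
    and K_descent: "\<exists>v\<in>K. pairing \<Sigma> a v < 0"
begin

abbreviation ratio :: "((real^'n) set \<Rightarrow> real) \<Rightarrow> real" where
  "ratio v \<equiv> pairing \<Sigma> a v / vnorm \<Sigma> v"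

abbreviation min_ratio :: real where
  "min_ratio \<equiv> Inf (ratio ` (K - {\<lambda>_. 0}))"

lemma vnorm_pos:
  assumes "v \<in> K" "v \<noteq> (\<lambda>_. 0)"
  shows "vnorm \<Sigma> v > 0"
proof -
  have "vnorm \<Sigma> v \<noteq> 0"
    using vnorm_eq_0_iff[OF finite_rays, of v] K_supp[OF assms(1)] assms(2) by blast
  then show ?thesis
    using vnorm_nonneg[of \<Sigma> v] by linarith
qed

lemma compact_unit_sphere: "compact (K \<inter> {v. vnorm \<Sigma> v = 1})"
proof -
  let ?B = "{v :: (real^'n) set \<Rightarrow> real. \<forall>\<rho>. v \<rho> \<in> (if \<rho> \<in> rays \<Sigma> then {-1..1} else {0})}"
  have sub: "K \<inter> {v. vnorm \<Sigma> v = 1} \<subseteq> ?B"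
  proof (clarify)
    fix v \<rho> assume v: "v \<in> K" "vnorm \<Sigma> v = 1"
    show "v \<rho> \<in> (if \<rho> \<in> rays \<Sigma> then {-1..1} else {0})"
    proof (cases "\<rho> \<in> rays \<Sigma>")
      case True
      then have "(v \<rho>)\<^sup>2 \<le> (\<Sum>\<rho>\<in>rays \<Sigma>. (v \<rho>)\<^sup>2)"
        using finite_rays by (intro member_le_sum) auto
      also have "\<dots> = 1"
        using v(2) unfolding vnorm_def by (simp add: sum_nonneg)
      finally show ?thesis
        using True by (simp add: abs_square_le_1 abs_le_iff)
    qed (use K_supp v in auto)
  qed
  have "compact ?B"
    by (rule compact_box) auto
  moreover have "closed {v. vnorm \<Sigma> v = 1}"
    by (rule closed_Collect_eq[OF continuous_on_vnorm continuous_on_const])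
  then have "closed (K \<inter> {v. vnorm \<Sigma> v = 1})"
    using K_closed by (rule closed_Int[rotated])
  ultimately have "compact (?B \<inter> (K \<inter> {v. vnorm \<Sigma> v = 1}))"
    by (rule compact_Int_closed)
  then show ?thesis
    by (simp only: Int_absorb1[OF sub])
qed

lemma min_ratio_attained:
  "\<exists>v0\<in>K. vnorm \<Sigma> v0 = 1 \<and> pairing \<Sigma> a v0 = min_ratio \<and> min_ratio < 0
     \<and> (\<forall>v\<in>K - {\<lambda>_. 0}. min_ratio \<le> ratio v)"
proof -
  let ?T = "K \<inter> {v. vnorm \<Sigma> v = 1}"
  define normalize where "normalize v = (\<lambda>\<rho>. (1 / vnorm \<Sigma> v) * v \<rho>)" for v
  have normalize: "normalize v \<in> ?T" "pairing \<Sigma> a (normalize v) = ratio v"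
    if "v \<in> K" "v \<noteq> (\<lambda>_. 0)" for v
  proof -
    have "normalize v \<in> K"
      unfolding normalize_def using vnorm_pos[OF that] by (intro K_scale[OF that(1)]) simp
    moreover have "vnorm \<Sigma> (normalize v) = 1"
      unfolding normalize_def vnorm_scale using vnorm_pos[OF that] by simp
    ultimately show "normalize v \<in> ?T"
      by blast
    show "pairing \<Sigma> a (normalize v) = ratio v"
      unfolding normalize_def pairing_scale by simp
  qed
  obtain vn where vn: "vn \<in> K" "pairing \<Sigma> a vn < 0"
    using K_descent by blast
  then have vn0: "vn \<noteq> (\<lambda>_. 0)"
    unfolding pairing_def by auto
  obtain v0 where v0: "v0 \<in> ?T" and min: "\<And>y. y \<in> ?T \<Longrightarrow> pairing \<Sigma> a v0 \<le> pairing \<Sigma> a y"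
    using continuous_attains_inf[OF compact_unit_sphere _ continuous_on_subset[OF continuous_on_pairing]]
      normalize(1)[OF vn(1) vn0] by blast
  have lb: "pairing \<Sigma> a v0 \<le> ratio v" if "v \<in> K" "v \<noteq> (\<lambda>_. 0)" for v
    using min[OF normalize(1)[OF that]] normalize(2)[OF that] by simp
  have "v0 \<noteq> (\<lambda>_. 0)"
    using v0 unfolding vnorm_def by auto
  then have eq: "min_ratio = pairing \<Sigma> a v0"
    using v0 lb by (intro cInf_eq_minimum) (auto intro!: image_eqI[of _ _ v0])
  have "ratio vn < 0"
    using vn(2) vnorm_pos[OF vn(1) vn0] by (simp add: divide_neg_pos)
  then have "min_ratio < 0"
    using lb[OF vn(1) vn0] eq by simp
  then show ?thesis
    using v0 eq lb by auto
qed

lemma min_ratio_minimizers_eq: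
  assumes l: "l \<in> K" "vnorm \<Sigma> l = - min_ratio" "pairing \<Sigma> a l = - (min_ratio)\<^sup>2"
    and l': "l' \<in> K" "vnorm \<Sigma> l' = - min_ratio" "pairing \<Sigma> a l' = - (min_ratio)\<^sup>2"
  shows "l = l'"
proof -
  define r where "r = - min_ratio"
  have r: "r > 0" and lb: "\<And>v. v \<in> K \<Longrightarrow> v \<noteq> (\<lambda>_. 0) \<Longrightarrow> - r \<le> ratio v"
    using min_ratio_attained unfolding r_def by auto
  define s where "s = (\<lambda>\<rho>. l \<rho> + l' \<rho>)"
  have "pairing \<Sigma> a s = pairing \<Sigma> a l + pairing \<Sigma> a l'"
    unfolding s_def by (rule pairing_add)
  then have s: "s \<in> K" "pairing \<Sigma> a s = - 2 * r\<^sup>2"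
    unfolding s_def r_def using l l' K_add by auto
  then have "s \<noteq> (\<lambda>_. 0)"
    using r unfolding pairing_def by auto
  then have "- r \<le> - 2 * r\<^sup>2 / vnorm \<Sigma> s" and "vnorm \<Sigma> s > 0"
    using lb[OF s(1)] s(2) vnorm_pos[OF s(1)] by auto
  \<comment> \<open>By the parallelogram law the sum of two distinct minimizers would have a smaller ratio.\<close>
  then have "2 * r \<le> vnorm \<Sigma> s"
    using r by (simp add: field_simps power2_eq_square)
  then have "(2 * r)\<^sup>2 \<le> (vnorm \<Sigma> s)\<^sup>2"
    using r by (intro power_mono) auto
  then have "(vnorm \<Sigma> (\<lambda>\<rho>. l \<rho> - l' \<rho>))\<^sup>2 \<le> 0"
    using vnorm_parallelogram[of \<Sigma> l l'] l(2) l'(2) unfolding s_def r_def by (simp add: power2_eq_square)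
  then have "vnorm \<Sigma> (\<lambda>\<rho>. l \<rho> - l' \<rho>) = 0"
    by simp
  then have "(\<lambda>\<rho>. l \<rho> - l' \<rho>) = (\<lambda>_. 0)"
    using vnorm_eq_0_iff[OF finite_rays, of "\<lambda>\<rho>. l \<rho> - l' \<rho>"] K_supp[OF l(1)] K_supp[OF l'(1)] by simp
  then show ?thesis
    by (simp add: fun_eq_iff)
qed

lemma ex1_min_ratio_vector:
  "\<exists>!l. l \<in> K \<and> vnorm \<Sigma> l = - min_ratio \<and> (l \<noteq> (\<lambda>_. 0) \<longrightarrow> ratio l = min_ratio)"
proof -
  obtain v0 where v0: "v0 \<in> K" "vnorm \<Sigma> v0 = 1" "pairing \<Sigma> a v0 = min_ratio" "min_ratio < 0"
    using min_ratio_attained by blast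
  define l0 where "l0 = (\<lambda>\<rho>. - min_ratio * v0 \<rho>)"
  have "l0 \<in> K"
    unfolding l0_def by (rule K_scale[OF v0(1)]) (use v0(4) in simp)
  moreover have "vnorm \<Sigma> l0 = - min_ratio" "pairing \<Sigma> a l0 = - (min_ratio)\<^sup>2"
    unfolding l0_def vnorm_scale pairing_scale using v0(2-4) by (simp_all add: power2_eq_square)
  ultimately have l0: "l0 \<in> K" "vnorm \<Sigma> l0 = - min_ratio" "pairing \<Sigma> a l0 = - (min_ratio)\<^sup>2"
    by blast+
  have char: "pairing \<Sigma> a l = - (min_ratio)\<^sup>2"
    if "l \<in> K" "vnorm \<Sigma> l = - min_ratio" "l \<noteq> (\<lambda>_. 0) \<longrightarrow> ratio l = min_ratio" for l
  proof -
    have "l \<noteq> (\<lambda>_. 0)"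
      using that(2) v0(4) unfolding vnorm_def by auto
    then show ?thesis
      using that v0(4) by (simp add: field_simps power2_eq_square)
  qed
  show ?thesis
  proof (rule ex1I[of _ l0])
    show "l0 \<in> K \<and> vnorm \<Sigma> l0 = - min_ratio \<and> (l0 \<noteq> (\<lambda>_. 0) \<longrightarrow> ratio l0 = min_ratio)"
      using l0 v0(4) by (simp add: power2_eq_square)
    show "l = l0" if "l \<in> K \<and> vnorm \<Sigma> l = - min_ratio \<and> (l \<noteq> (\<lambda>_. 0) \<longrightarrow> ratio l = min_ratio)" for l
      using min_ratio_minimizers_eq[of l l0] char that l0 by blast
  qed
qed

end

lemma GammaR_supp: "l \<in> GammaR \<Sigma> \<Longrightarrow> \<rho> \<notin> rays \<Sigma> \<Longrightarrow> l \<rho> = 0"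
  unfolding GammaR_def by auto

lemma closed_sigma_x: "closed (sigma_x \<Sigma> x)"
proof -
  have "sigma_x \<Sigma> x = (\<Inter>\<rho>\<in>- rays \<Sigma>. {v. v \<rho> = 0}) \<inter> {v. (\<Sum>\<rho>\<in>rays \<Sigma>. v \<rho> *\<^sub>R prim_gen \<rho>) = 0}
      \<inter> (\<Inter>\<rho>\<in>{\<rho>\<in>rays \<Sigma>. x \<rho> \<noteq> 0}. {v. 0 \<le> v \<rho>})"
    unfolding sigma_x_def GammaR_def by auto
  then show ?thesis
    by (simp only:) (intro closed_Int closed_INT ballI closed_Collect_eq closed_Collect_le
        continuous_intros continuous_on_product_coordinates)+
qed

lemma ratio_minimization_sigma_x:
  assumes "finite (rays \<Sigma>)" "\<exists>v\<in>sigma_x \<Sigma> x. pairing \<Sigma> a v < 0"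
  shows "ratio_minimization \<Sigma> a (sigma_x \<Sigma> x)"
proof
  show "v \<rho> = 0" if "v \<in> sigma_x \<Sigma> x" "\<rho> \<notin> rays \<Sigma>" for v \<rho>
    using that unfolding sigma_x_def GammaR_def by blast
  show "(\<lambda>\<rho>. v \<rho> + w \<rho>) \<in> sigma_x \<Sigma> x" if "v \<in> sigma_x \<Sigma> x" "w \<in> sigma_x \<Sigma> x" for v w
    using that unfolding sigma_x_def GammaR_def by (simp add: scaleR_add_left sum.distrib)
  show "(\<lambda>\<rho>. t * v \<rho>) \<in> sigma_x \<Sigma> x" if "v \<in> sigma_x \<Sigma> x" "t \<ge> 0" for v t
  proof -
    have "(\<Sum>\<rho>\<in>rays \<Sigma>. (t * v \<rho>) *\<^sub>R prim_gen \<rho>) = t *\<^sub>R (\<Sum>\<rho>\<in>rays \<Sigma>. v \<rho> *\<^sub>R prim_gen \<rho>)"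
      by (simp add: scaleR_sum_right)
    then show ?thesis
      using that unfolding sigma_x_def GammaR_def by simp
  qed
qed (use assms closed_sigma_x in blast)+

lemma lam_char:
  assumes "finite (rays \<Sigma>)" "\<exists>v\<in>sigma_x \<Sigma> x. pairing \<Sigma> a v < 0"
  shows "l = lam \<Sigma> a x \<longleftrightarrow> l \<in> sigma_x \<Sigma> x \<and> vnorm \<Sigma> l = - Mval \<Sigma> a x \<and>
           (l \<noteq> (\<lambda>_. 0) \<longrightarrow> pairing \<Sigma> a l / vnorm \<Sigma> l = Mval \<Sigma> a x)"
    (is "_ \<longleftrightarrow> ?P l")
proof -
  interpret ratio_minimization \<Sigma> a "sigma_x \<Sigma> x"
    using ratio_minimization_sigma_x[OF assms] .
  have ex1: "\<exists>!l. ?P l"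
    using ex1_min_ratio_vector unfolding Mval_def .
  moreover have "?P (lam \<Sigma> a x)"
    unfolding lam_def by (rule theI'[OF ex1])
  ultimately show ?thesis
    by blast
qed

section \<open>Real relations from integer relations\<close>

text \<open>A Hamel basis of R over Q containing c provides the coordinate functional at c. (The
  qualified name Modules.additive is needed: plain additive means additivity of set functions.)\<close>
lemma rat_linear_functional:
  fixes c :: real
  assumes "c \<noteq> 0"
  obtains f :: "real \<Rightarrow> real"
  where "Modules.additive f" "\<And>q x. q \<in> \<rat> \<Longrightarrow> f (q * x) = q * f x" "\<And>x. f x \<in> \<rat>" "f c = 1"
proof -
  interpret V: vector_space "\<lambda>q::rat. \<lambda>x::real. of_rat q * x"
    by unfold_locales (auto simp: algebra_simps of_rat_add of_rat_mult)
  have ind: "V.independent {c}"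
    using assms by (simp add: V.independent_insert V.span_empty)
  define B where "B = V.extend_basis {c}"
  have B: "V.independent B" "V.span B = UNIV" "c \<in> B"
    using V.independent_extend_basis[OF ind] V.span_extend_basis[OF ind] V.extend_basis_superset[OF ind]
    unfolding B_def by auto
  define f :: "real \<Rightarrow> real" where "f x = of_rat (V.representation B x c)" for x
  have "Modules.additive f"
    by unfold_locales (simp add: f_def V.representation_add[OF B(1)] B(2) of_rat_add)
  moreover have "f (q * x) = q * f x" if "q \<in> \<rat>" for q x
    using that by (cases rule: Rats_cases) (simp add: f_def V.representation_scale[OF B(1)] B(2) of_rat_mult)
  moreover have "f c = 1"
    unfolding f_def using V.representation_basis[OF B(1,3)] by simp
  ultimately show ?thesis
    using that unfolding f_def by simp
qed

lemma rat_common_denominator: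
  fixes q :: "'r \<Rightarrow> real"
  assumes "finite R" "\<And>\<rho>. \<rho> \<in> R \<Longrightarrow> q \<rho> \<in> \<rat>"
  shows "\<exists>D::int. D > 0 \<and> (\<forall>\<rho>\<in>R. of_int D * q \<rho> \<in> \<int>)"
  using assms
proof (induction R rule: finite_induct)
  case empty
  then show ?case
    by (intro exI[of _ 1]) auto
next
  case (insert x F)
  then obtain D :: int where D: "D > 0" "\<forall>\<rho>\<in>F. of_int D * q \<rho> \<in> \<int>"
    by auto
  obtain n d :: int where nd: "d > 0" "q x = of_int n / of_int d"
    using insert.prems[of x] by (auto elim!: Rats_cases')
  have "of_int (D * d) * q \<rho> \<in> \<int>" if "\<rho> \<in> insert x F" for \<rho>
  proof (cases "\<rho> = x")
    case True
    then show ?thesis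
      using nd by (simp add: field_simps)
  next
    case False
    then have "of_int d * (of_int D * q \<rho>) \<in> \<int>"
      using that D(2) by (auto intro: Ints_mult)
    then show ?thesis
      by (simp add: algebra_simps)
  qed
  then show ?case
    using D(1) nd(1) by (intro exI[of _ "D * d"]) auto
qed

lemma rat_relation_transfer:
  fixes u :: "'r \<Rightarrow> real^'n" and u' :: "'r \<Rightarrow> real^'m"
  assumes fin: "finite R"
    and int_rel: "\<And>a::'r \<Rightarrow> int. (\<Sum>\<rho>\<in>R. of_int (a \<rho>) *\<^sub>R u \<rho>) = 0 \<Longrightarrow> (\<Sum>\<rho>\<in>R. of_int (a \<rho>) *\<^sub>R u' \<rho>) = 0"
    and q: "\<And>\<rho>. \<rho> \<in> R \<Longrightarrow> q \<rho> \<in> \<rat>" and rel: "(\<Sum>\<rho>\<in>R. q \<rho> *\<^sub>R u \<rho>) = 0"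
  shows "(\<Sum>\<rho>\<in>R. q \<rho> *\<^sub>R u' \<rho>) = 0"
proof -
  obtain D :: int where D: "D > 0" "\<And>\<rho>. \<rho> \<in> R \<Longrightarrow> of_int D * q \<rho> \<in> \<int>"
    using rat_common_denominator[of R q] fin q by blast
  define a where "a \<rho> = \<lfloor>of_int D * q \<rho>\<rfloor>" for \<rho>
  have a: "of_int (a \<rho>) = of_int D * q \<rho>" if "\<rho> \<in> R" for \<rho>
    using D(2)[OF that] unfolding a_def by (metis Ints_cases floor_of_int)
  have scale: "(\<Sum>\<rho>\<in>R. of_int (a \<rho>) *\<^sub>R v \<rho>) = of_int D *\<^sub>R (\<Sum>\<rho>\<in>R. q \<rho> *\<^sub>R v \<rho>)"
    for v :: "'r \<Rightarrow> 'b::real_vector"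
    by (simp add: scaleR_sum_right a cong: sum.cong)
  have "(\<Sum>\<rho>\<in>R. of_int (a \<rho>) *\<^sub>R u' \<rho>) = 0"
    using int_rel scale[of u] rel by simp
  then show ?thesis
    using scale[of u'] D(1) by simp
qed

lemma rat_linear_lattice_comb:
  fixes f :: "real \<Rightarrow> real" and v :: "'r \<Rightarrow> real^'n"
  assumes f: "Modules.additive f" "\<And>q x. q \<in> \<rat> \<Longrightarrow> f (q * x) = q * f x"
    and v: "\<forall>\<rho>\<in>R. lattice_pt (v \<rho>)"
  shows "f (\<Sum>\<rho>\<in>R. b \<rho> * v \<rho> $ j) = (\<Sum>\<rho>\<in>R. f (b \<rho>) * v \<rho> $ j)"
proof -
  have "f (b \<rho> * v \<rho> $ j) = f (b \<rho>) * v \<rho> $ j" if "\<rho> \<in> R" for \<rho>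
  proof -
    have "v \<rho> $ j \<in> \<rat>"
      using v that Ints_subset_Rats unfolding lattice_pt_def by blast
    then show ?thesis
      using f(2)[of "v \<rho> $ j" "b \<rho>"] by (simp add: mult.commute)
  qed
  then show ?thesis
    by (simp add: additive.sum[OF f(1)])
qed

lemma real_relation_transfer:
  fixes u :: "'r \<Rightarrow> real^'n" and u' :: "'r \<Rightarrow> real^'m"
  assumes fin: "finite R" and lattice: "\<forall>\<rho>\<in>R. lattice_pt (u \<rho>)" "\<forall>\<rho>\<in>R. lattice_pt (u' \<rho>)"
    and int_rel: "\<And>a::'r \<Rightarrow> int. (\<Sum>\<rho>\<in>R. of_int (a \<rho>) *\<^sub>R u \<rho>) = 0 \<Longrightarrow> (\<Sum>\<rho>\<in>R. of_int (a \<rho>) *\<^sub>R u' \<rho>) = 0"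
    and rel: "(\<Sum>\<rho>\<in>R. b \<rho> *\<^sub>R u \<rho>) = 0"
  shows "(\<Sum>\<rho>\<in>R. b \<rho> *\<^sub>R u' \<rho>) = 0"
proof (rule ccontr)
  assume "(\<Sum>\<rho>\<in>R. b \<rho> *\<^sub>R u' \<rho>) \<noteq> 0"
  then obtain i where "(\<Sum>\<rho>\<in>R. b \<rho> * u' \<rho> $ i) \<noteq> 0"
    by (auto simp: vec_eq_iff sum_component)
  then obtain f where f: "Modules.additive f" "\<And>q x. q \<in> \<rat> \<Longrightarrow> f (q * x) = q * f x" "\<And>x. f x \<in> \<rat>"
    and f1: "f (\<Sum>\<rho>\<in>R. b \<rho> * u' \<rho> $ i) = 1"
    using rat_linear_functional by blast
  have "(\<Sum>\<rho>\<in>R. f (b \<rho>) * u \<rho> $ j) = 0" for j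
  proof -
    have "(\<Sum>\<rho>\<in>R. b \<rho> * u \<rho> $ j) = 0"
      using arg_cong[OF rel, of "\<lambda>v. v $ j"] by (simp add: sum_component)
    then show ?thesis
      using rat_linear_lattice_comb[OF f(1,2) lattice(1), of b j] additive.zero[OF f(1)] by simp
  qed
  then have "(\<Sum>\<rho>\<in>R. f (b \<rho>) *\<^sub>R u \<rho>) = 0"
    by (simp add: vec_eq_iff sum_component)
  then have "(\<Sum>\<rho>\<in>R. f (b \<rho>) *\<^sub>R u' \<rho>) = 0"
    using rat_relation_transfer[OF fin int_rel, where q = "\<lambda>\<rho>. f (b \<rho>)"] f(3) by simp
  then have "(\<Sum>\<rho>\<in>R. f (b \<rho>) *\<^sub>R u' \<rho>) $ i = 0"
    by simp
  then have "(\<Sum>\<rho>\<in>R. f (b \<rho>) * u' \<rho> $ i) = 0"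
    by (simp add: sum_component)
  then show False
    using rat_linear_lattice_comb[OF f(1,2) lattice(2), of b i] f1 by simp
qed

section \<open>Amply equivalent fans\<close>

locale amply_equivalent_fans =
  fixes \<Sigma>1 :: "(real^'n) set set" and \<Sigma>2 :: "(real^'m) set set"
    and \<Psi> :: "(real^'n) set \<Rightarrow> (real^'m) set"
  assumes amply_equivalent: "amply_equivalent \<Sigma>1 \<Sigma>2 \<Psi>"
begin

lemma complete_fan1: "complete_fan \<Sigma>1"
  and complete_fan2: "complete_fan \<Sigma>2"
  and bij_Psi: "bij_betw \<Psi> (rays \<Sigma>1) (rays \<Sigma>2)"
  and primitive_collection_Psi:
    "\<And>C. C \<subseteq> rays \<Sigma>1 \<Longrightarrow> primitive_collection \<Sigma>1 C \<longleftrightarrow> primitive_collection \<Sigma>2 (\<Psi> ` C)"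
  and int_relation_Psi: "\<And>a :: (real^'n) set \<Rightarrow> int.
    (\<Sum>\<rho>\<in>rays \<Sigma>1. of_int (a \<rho>) *\<^sub>R prim_gen \<rho>) = 0 \<longleftrightarrow>
    (\<Sum>\<rho>\<in>rays \<Sigma>1. of_int (a \<rho>) *\<^sub>R prim_gen (\<Psi> \<rho>)) = 0"
  using amply_equivalent unfolding amply_equivalent_def by auto

lemma fan1: "is_fan \<Sigma>1" and fan2: "is_fan \<Sigma>2"
  using complete_fan1 complete_fan2 unfolding complete_fan_def by auto

lemma finite_rays1: "finite (rays \<Sigma>1)" and finite_rays2: "finite (rays \<Sigma>2)"
  using finite_fan[OF fan1] finite_fan[OF fan2] unfolding rays_def by auto

abbreviation Psi_inv :: "(real^'m) set \<Rightarrow> (real^'n) set" where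
  "Psi_inv \<equiv> inv_into (rays \<Sigma>1) \<Psi>"

lemma Psi_in_rays: "\<rho> \<in> rays \<Sigma>1 \<Longrightarrow> \<Psi> \<rho> \<in> rays \<Sigma>2"
  using bij_Psi by (rule bij_betw_apply)

lemma Psi_inv_in_rays: "\<rho>' \<in> rays \<Sigma>2 \<Longrightarrow> Psi_inv \<rho>' \<in> rays \<Sigma>1"
  using bij_Psi by (simp add: bij_betw_imp_surj_on inv_into_into)

lemma Psi_inv_Psi: "\<rho> \<in> rays \<Sigma>1 \<Longrightarrow> Psi_inv (\<Psi> \<rho>) = \<rho>"
  using bij_Psi by (simp add: bij_betw_inv_into_left)

lemma Psi_Psi_inv: "\<rho>' \<in> rays \<Sigma>2 \<Longrightarrow> \<Psi> (Psi_inv \<rho>') = \<rho>'"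
  using bij_Psi by (simp add: bij_betw_inv_into_right)

lemma rays2_eq_Psi_image: "rays \<Sigma>2 = \<Psi> ` rays \<Sigma>1"
  using bij_Psi by (simp add: bij_betw_def)

lemma sum_rays2_Psi: "(\<Sum>\<rho>'\<in>rays \<Sigma>2. g \<rho>') = (\<Sum>\<rho>\<in>rays \<Sigma>1. g (\<Psi> \<rho>))"
  using sum.reindex_bij_betw[OF bij_Psi, of g] by simp

abbreviation \<phi> :: "((real^'n) set \<Rightarrow> real) \<Rightarrow> (real^'m) set \<Rightarrow> real" where
  "\<phi> \<equiv> phi \<Sigma>1 \<Sigma>2 \<Psi>"

lemma phi_Psi: "\<rho> \<in> rays \<Sigma>1 \<Longrightarrow> \<phi> b (\<Psi> \<rho>) = b \<rho>"
  unfolding phi_def using Psi_in_rays Psi_inv_Psi by simp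

lemma pairing_phi: "pairing \<Sigma>2 a (\<phi> l) = pairing \<Sigma>1 (phi_star \<Sigma>1 \<Psi> a) l"
  unfolding pairing_def sum_rays2_Psi by (rule sum.cong) (simp_all add: phi_star_def phi_Psi)

lemma vnorm_phi: "vnorm \<Sigma>2 (\<phi> l) = vnorm \<Sigma>1 l"
  unfolding vnorm_def sum_rays2_Psi by (simp add: phi_Psi)

lemma phi_star_phi: "(\<And>\<rho>. \<rho> \<notin> rays \<Sigma>1 \<Longrightarrow> l \<rho> = 0) \<Longrightarrow> phi_star \<Sigma>1 \<Psi> (\<phi> l) = l"
  unfolding phi_star_def by (auto simp: fun_eq_iff phi_Psi)

lemma phi_phi_star: "(\<And>\<rho>. \<rho> \<notin> rays \<Sigma>2 \<Longrightarrow> l \<rho> = 0) \<Longrightarrow> \<phi> (phi_star \<Sigma>1 \<Psi> l) = l"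
  unfolding phi_star_def phi_def by (auto simp: fun_eq_iff Psi_inv_in_rays Psi_Psi_inv)

lemma phi_eq_0_iff:
  assumes "\<And>\<rho>. \<rho> \<notin> rays \<Sigma>1 \<Longrightarrow> l \<rho> = 0"
  shows "\<phi> l = (\<lambda>_. 0) \<longleftrightarrow> l = (\<lambda>_. 0)"
proof
  assume \<phi>0: "\<phi> l = (\<lambda>_. 0)"
  have "l \<rho> = 0" for \<rho>
    using phi_Psi[of \<rho> l] \<phi>0 assms by (cases "\<rho> \<in> rays \<Sigma>1") auto
  then show "l = (\<lambda>_. 0)"
    by auto
qed (simp add: phi_def)

lemma GammaR_phi_iff:
  assumes "\<And>\<rho>. \<rho> \<notin> rays \<Sigma>1 \<Longrightarrow> l \<rho> = 0"
  shows "\<phi> l \<in> GammaR \<Sigma>2 \<longleftrightarrow> l \<in> GammaR \<Sigma>1"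
proof -
  have lattice1: "\<forall>\<rho>\<in>rays \<Sigma>1. lattice_pt (prim_gen \<rho>)"
    using prim_gen_ray(1)[OF fan1] by blast
  have lattice2: "\<forall>\<rho>\<in>rays \<Sigma>1. lattice_pt (prim_gen (\<Psi> \<rho>))"
    using prim_gen_ray(1)[OF fan2] Psi_in_rays by blast
  have "(\<Sum>\<rho>\<in>rays \<Sigma>1. l \<rho> *\<^sub>R prim_gen \<rho>) = 0 \<longleftrightarrow> (\<Sum>\<rho>\<in>rays \<Sigma>1. l \<rho> *\<^sub>R prim_gen (\<Psi> \<rho>)) = 0"
  proof -
    have "(\<Sum>\<rho>\<in>rays \<Sigma>1. of_int (a \<rho>) *\<^sub>R prim_gen \<rho>) = 0 \<Longrightarrow> (\<Sum>\<rho>\<in>rays \<Sigma>1. of_int (a \<rho>) *\<^sub>R prim_gen (\<Psi> \<rho>)) = 0"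
      "(\<Sum>\<rho>\<in>rays \<Sigma>1. of_int (a \<rho>) *\<^sub>R prim_gen (\<Psi> \<rho>)) = 0 \<Longrightarrow> (\<Sum>\<rho>\<in>rays \<Sigma>1. of_int (a \<rho>) *\<^sub>R prim_gen \<rho>) = 0"
      for a :: "(real^'n) set \<Rightarrow> int"
      using int_relation_Psi[of a] by simp_all
    from real_relation_transfer[OF finite_rays1 lattice1 lattice2 this(1)]
      real_relation_transfer[OF finite_rays1 lattice2 lattice1 this(2)]
    show ?thesis
      by blast
  qed
  moreover have "(\<Sum>\<rho>'\<in>rays \<Sigma>2. \<phi> l \<rho>' *\<^sub>R prim_gen \<rho>') = (\<Sum>\<rho>\<in>rays \<Sigma>1. l \<rho> *\<^sub>R prim_gen (\<Psi> \<rho>))"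
    unfolding sum_rays2_Psi by (simp add: phi_Psi)
  ultimately show ?thesis
    unfolding GammaR_def using assms by (auto simp: phi_def)
qed

abbreviation pull\<^sub>\<Psi> :: "((real^'m) set \<Rightarrow> complex) \<Rightarrow> (real^'n) set \<Rightarrow> complex" where
  "pull\<^sub>\<Psi> \<equiv> pull \<Sigma>1 \<Psi>"

lemma sigma_x_phi_iff:
  assumes l: "l \<in> GammaR \<Sigma>1"
  shows "\<phi> l \<in> sigma_x \<Sigma>2 y \<longleftrightarrow> l \<in> sigma_x \<Sigma>1 (pull\<^sub>\<Psi> y)"
proof -
  have "(\<forall>\<rho>'\<in>rays \<Sigma>2. y \<rho>' \<noteq> 0 \<longrightarrow> 0 \<le> \<phi> l \<rho>') \<longleftrightarrow> (\<forall>\<rho>\<in>rays \<Sigma>1. y (\<Psi> \<rho>) \<noteq> 0 \<longrightarrow> 0 \<le> l \<rho>)"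
    unfolding rays2_eq_Psi_image by (auto simp: phi_Psi)
  moreover have "\<phi> l \<in> GammaR \<Sigma>2"
    using GammaR_phi_iff[OF GammaR_supp[OF l]] l by simp
  ultimately show ?thesis
    unfolding sigma_x_def pull_def using l by auto
qed

lemma sigma_x_pull:
  "sigma_x \<Sigma>2 y = \<phi> ` sigma_x \<Sigma>1 (pull\<^sub>\<Psi> y)"
proof
  show "\<phi> ` sigma_x \<Sigma>1 (pull\<^sub>\<Psi> y) \<subseteq> sigma_x \<Sigma>2 y"
    using sigma_x_phi_iff unfolding sigma_x_def by blast
  show "sigma_x \<Sigma>2 y \<subseteq> \<phi> ` sigma_x \<Sigma>1 (pull\<^sub>\<Psi> y)"
  proof
    fix l' assume l': "l' \<in> sigma_x \<Sigma>2 y"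
    define l where "l = phi_star \<Sigma>1 \<Psi> l'"
    have supp: "\<And>\<rho>. \<rho> \<notin> rays \<Sigma>1 \<Longrightarrow> l \<rho> = 0"
      unfolding l_def phi_star_def by simp
    have "\<phi> l = l'"
      unfolding l_def using l' by (intro phi_phi_star) (auto simp: sigma_x_def GammaR_def)
    then have "l \<in> GammaR \<Sigma>1"
      using GammaR_phi_iff[OF supp] l' unfolding sigma_x_def by auto
    then have "l \<in> sigma_x \<Sigma>1 (pull\<^sub>\<Psi> y)"
      using sigma_x_phi_iff[of l y] \<open>\<phi> l = l'\<close> l' by simp
    then show "l' \<in> \<phi> ` sigma_x \<Sigma>1 (pull\<^sub>\<Psi> y)"
      using \<open>\<phi> l = l'\<close> by blast
  qed
qed

lemma Mval_pull: "Mval \<Sigma>1 (phi_star \<Sigma>1 \<Psi> a) (pull\<^sub>\<Psi> y) = Mval \<Sigma>2 a y"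
proof -
  have supp: "\<And>\<rho>. \<rho> \<notin> rays \<Sigma>1 \<Longrightarrow> l \<rho> = 0" if "l \<in> sigma_x \<Sigma>1 (pull\<^sub>\<Psi> y)" for l
    using that unfolding sigma_x_def GammaR_def by auto
  have "\<phi> l = (\<lambda>_. 0) \<longleftrightarrow> l = (\<lambda>_. 0)" if "l \<in> sigma_x \<Sigma>1 (pull\<^sub>\<Psi> y)" for l
    by (rule phi_eq_0_iff) (rule supp[OF that])
  then have "sigma_x \<Sigma>2 y - {\<lambda>_. 0} = \<phi> ` (sigma_x \<Sigma>1 (pull\<^sub>\<Psi> y) - {\<lambda>_. 0})"
    unfolding sigma_x_pull by auto
  then show ?thesis
    unfolding Mval_def by (simp only: image_image pairing_phi vnorm_phi)
qed

lemma Zlocus_pull_iff: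
  assumes y: "y \<in> cspace \<Sigma>2"
  shows "pull\<^sub>\<Psi> y \<in> Zlocus \<Sigma>1 \<longleftrightarrow> y \<in> Zlocus \<Sigma>2"
proof
  assume "pull\<^sub>\<Psi> y \<in> Zlocus \<Sigma>1"
  then obtain C where C: "primitive_collection \<Sigma>1 C" "\<forall>\<rho>\<in>C. pull\<^sub>\<Psi> y \<rho> = 0"
    unfolding Zlocus_def by auto
  have CR: "C \<subseteq> rays \<Sigma>1"
    using C(1) unfolding primitive_collection_def by auto
  have "primitive_collection \<Sigma>2 (\<Psi> ` C)"
    using primitive_collection_Psi[OF CR] C(1) by simp
  moreover have "y (\<Psi> \<rho>) = 0" if "\<rho> \<in> C" for \<rho>
    using C(2) CR that unfolding pull_def by (metis subsetD)
  then have "\<forall>\<rho>'\<in>\<Psi> ` C. y \<rho>' = 0"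
    by blast
  ultimately show "y \<in> Zlocus \<Sigma>2"
    using y unfolding Zlocus_def by auto
next
  assume "y \<in> Zlocus \<Sigma>2"
  then obtain C2 where C2: "primitive_collection \<Sigma>2 C2" "\<forall>\<rho>\<in>C2. y \<rho> = 0"
    unfolding Zlocus_def by auto
  have CR2: "C2 \<subseteq> rays \<Sigma>2"
    using C2(1) unfolding primitive_collection_def by auto
  define C where "C = Psi_inv ` C2"
  have CR: "C \<subseteq> rays \<Sigma>1"
    unfolding C_def using CR2 Psi_inv_in_rays by blast
  have "\<Psi> ` C = (\<lambda>\<rho>'. \<rho>') ` C2"
    unfolding C_def image_image by (rule image_cong[OF refl]) (use CR2 Psi_Psi_inv in blast)
  then have "\<Psi> ` C = C2"
    by simp
  then have "primitive_collection \<Sigma>1 C"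
    using primitive_collection_Psi[OF CR] C2(1) by simp
  moreover have "\<forall>\<rho>\<in>C. pull\<^sub>\<Psi> y \<rho> = 0"
    using C2(2) CR \<open>\<Psi> ` C = C2\<close> unfolding pull_def by auto
  moreover have "pull\<^sub>\<Psi> y \<in> cspace \<Sigma>1"
    unfolding pull_def cspace_def by simp
  ultimately show "pull\<^sub>\<Psi> y \<in> Zlocus \<Sigma>1"
    unfolding Zlocus_def by blast
qed

lemma Zlocus_pull: "Zlocus \<Sigma>1 = pull\<^sub>\<Psi> ` Zlocus \<Sigma>2"
proof
  show "pull\<^sub>\<Psi> ` Zlocus \<Sigma>2 \<subseteq> Zlocus \<Sigma>1"
  proof (rule image_subsetI)
    fix y assume y: "y \<in> Zlocus \<Sigma>2"
    then have "y \<in> cspace \<Sigma>2"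
      unfolding Zlocus_def by blast
    then show "pull\<^sub>\<Psi> y \<in> Zlocus \<Sigma>1"
      using Zlocus_pull_iff y by blast
  qed
  show "Zlocus \<Sigma>1 \<subseteq> pull\<^sub>\<Psi> ` Zlocus \<Sigma>2"
  proof
    fix x assume x: "x \<in> Zlocus \<Sigma>1"
    define y where "y \<rho>' = (if \<rho>' \<in> rays \<Sigma>2 then x (Psi_inv \<rho>') else 0)" for \<rho>'
    have y: "y \<in> cspace \<Sigma>2"
      unfolding y_def cspace_def by auto
    have "x \<in> cspace \<Sigma>1"
      using x unfolding Zlocus_def by blast
    then have "pull\<^sub>\<Psi> y = x"
      unfolding pull_def y_def cspace_def fun_eq_iff using Psi_in_rays Psi_inv_Psi by auto
    then show "x \<in> pull\<^sub>\<Psi> ` Zlocus \<Sigma>2"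
      using Zlocus_pull_iff[OF y] x by blast
  qed
qed

lemma descent_pull:
  assumes amp: "ample_div \<Sigma>2 a" and y: "y \<in> Zlocus \<Sigma>2"
  shows "\<exists>v\<in>sigma_x \<Sigma>1 (pull\<^sub>\<Psi> y). pairing \<Sigma>1 (phi_star \<Sigma>1 \<Psi> a) v < 0"
proof -
  obtain v where "v \<in> sigma_x \<Sigma>2 y" "pairing \<Sigma>2 a v < 0"
    using ample_pairing_neg[OF complete_fan2 amp y] by blast
  then show ?thesis
    unfolding sigma_x_pull by (auto simp: pairing_phi)
qed

lemma lam_pull:
  assumes amp: "ample_div \<Sigma>2 a" and y: "y \<in> Zlocus \<Sigma>2"
  shows "lam \<Sigma>1 (phi_star \<Sigma>1 \<Psi> a) (pull\<^sub>\<Psi> y) \<in> GammaR \<Sigma>1"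
    and "lam \<Sigma>2 a y = \<phi> (lam \<Sigma>1 (phi_star \<Sigma>1 \<Psi> a) (pull\<^sub>\<Psi> y))"
proof -
  let ?a1 = "phi_star \<Sigma>1 \<Psi> a"
  let ?l = "lam \<Sigma>1 ?a1 (pull\<^sub>\<Psi> y)"
  have l: "?l \<in> sigma_x \<Sigma>1 (pull\<^sub>\<Psi> y)" "vnorm \<Sigma>1 ?l = - Mval \<Sigma>1 ?a1 (pull\<^sub>\<Psi> y)"
    "?l \<noteq> (\<lambda>_. 0) \<Longrightarrow> pairing \<Sigma>1 ?a1 ?l / vnorm \<Sigma>1 ?l = Mval \<Sigma>1 ?a1 (pull\<^sub>\<Psi> y)"
    using lam_char[OF finite_rays1 descent_pull[OF amp y], of ?l] by auto
  then show G: "?l \<in> GammaR \<Sigma>1"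
    unfolding sigma_x_def by blast
  have "\<phi> ?l \<in> sigma_x \<Sigma>2 y"
    using sigma_x_phi_iff[OF G] l(1) by blast
  moreover have "\<phi> ?l \<noteq> (\<lambda>_. 0) \<longleftrightarrow> ?l \<noteq> (\<lambda>_. 0)"
    using phi_eq_0_iff[OF GammaR_supp[OF G]] by simp
  ultimately show "lam \<Sigma>2 a y = \<phi> ?l"
    using lam_char[OF finite_rays2 ample_pairing_neg[OF complete_fan2 amp y], of "\<phi> ?l"] l
    by (simp add: pairing_phi vnorm_phi Mval_pull)
qed

lemma inj_on_phi_GammaR: "inj_on \<phi> (GammaR \<Sigma>1)"
  by (rule inj_on_inverseI[where g = "phi_star \<Sigma>1 \<Psi>"]) (simp add: phi_star_phi GammaR_supp)

lemma stratum_pull: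
  assumes amp: "ample_div \<Sigma>2 a" and l: "l \<in> GammaR \<Sigma>1"
  shows "stratum \<Sigma>1 (phi_star \<Sigma>1 \<Psi> a) l = pull\<^sub>\<Psi> ` stratum \<Sigma>2 a (\<phi> l)"
proof -
  have "lam \<Sigma>1 (phi_star \<Sigma>1 \<Psi> a) (pull\<^sub>\<Psi> y) = l \<longleftrightarrow> lam \<Sigma>2 a y = \<phi> l"
    if y: "y \<in> Zlocus \<Sigma>2" for y
    using lam_pull[OF amp y] inj_onD[OF inj_on_phi_GammaR _ _ l] by auto
  then show ?thesis
    unfolding stratum_def Zlocus_pull by blast
qed

lemma phi_coeffs_in_iff:
  assumes "\<And>\<rho>. \<rho> \<notin> rays \<Sigma>1 \<Longrightarrow> l \<rho> = 0" "0 \<in> K"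
  shows "(\<forall>\<rho>'. \<phi> l \<rho>' \<in> K) \<longleftrightarrow> (\<forall>\<rho>. l \<rho> \<in> K)"
proof
  assume \<phi>K: "\<forall>\<rho>'. \<phi> l \<rho>' \<in> K"
  show "\<forall>\<rho>. l \<rho> \<in> K"
  proof
    fix \<rho>
    show "l \<rho> \<in> K"
      using \<phi>K[rule_format, of "\<Psi> \<rho>"] phi_Psi[of \<rho> l] assms by (cases "\<rho> \<in> rays \<Sigma>1") auto
  qed
qed (use assms(2) in \<open>simp add: phi_def\<close>)

lemma strat_equiv_pull:
  assumes amp: "R_ample \<Sigma>2 a" and K0: "0 \<in> K"
  shows "strat_equiv \<Sigma>1 \<Sigma>2 \<Psi> a K"
proof -
  have amp': "ample_div \<Sigma>2 a"
    using amp unfolding R_ample_def by auto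
  let ?a1 = "phi_star \<Sigma>1 \<Psi> a"
  let ?I1 = "strata_index \<Sigma>1 ?a1 K"
  let ?I2 = "strata_index \<Sigma>2 a K"
  have I1_iff: "l \<in> ?I1 \<longleftrightarrow> \<phi> l \<in> ?I2" if l: "l \<in> GammaR \<Sigma>1" for l
    unfolding strata_index_def using l GammaR_phi_iff[OF GammaR_supp[OF l]] stratum_pull[OF amp' l]
      phi_coeffs_in_iff[OF GammaR_supp[OF l] K0] by auto
  have I1: "?I1 \<subseteq> GammaR \<Sigma>1"
    unfolding strata_index_def by blast
  have "?I2 \<subseteq> \<phi> ` ?I1"
  proof
    fix l' assume l': "l' \<in> ?I2"
    define l where "l = phi_star \<Sigma>1 \<Psi> l'"
    have "\<phi> l = l'"
      unfolding l_def using l' by (intro phi_phi_star) (auto simp: strata_index_def GammaR_def)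
    moreover have "\<And>\<rho>. \<rho> \<notin> rays \<Sigma>1 \<Longrightarrow> l \<rho> = 0"
      unfolding l_def phi_star_def by simp
    then have "l \<in> GammaR \<Sigma>1"
      using GammaR_phi_iff \<open>\<phi> l = l'\<close> l' unfolding strata_index_def by blast
    ultimately show "l' \<in> \<phi> ` ?I1"
      using I1_iff l' by blast
  qed
  moreover have "\<phi> ` ?I1 \<subseteq> ?I2"
    using I1_iff I1 by blast
  ultimately have "bij_betw \<phi> ?I1 ?I2"
    unfolding bij_betw_def using inj_on_subset[OF inj_on_phi_GammaR I1] by blast
  moreover have "\<forall>l\<in>?I1. stratum \<Sigma>1 ?a1 l = pull\<^sub>\<Psi> ` stratum \<Sigma>2 a (\<phi> l)"
    using stratum_pull[OF amp'] I1 by blast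
  ultimately show ?thesis
    unfolding strat_equiv_def Let_def by (simp add: vnorm_phi)
qed

end

theorem theoremC:
  fixes \<Sigma>1 :: "(real^'n) set set" and \<Sigma>2 :: "(real^'m) set set"
    and \<Psi> :: "(real^'n) set \<Rightarrow> (real^'m) set"
  assumes "amply_equivalent \<Sigma>1 \<Sigma>2 \<Psi>"
  shows "(\<forall>D. Q_ample \<Sigma>2 D \<longrightarrow> strat_equiv \<Sigma>1 \<Sigma>2 \<Psi> D \<rat>)
       \<and> (\<forall>D. R_ample \<Sigma>2 D \<longrightarrow> strat_equiv \<Sigma>1 \<Sigma>2 \<Psi> D UNIV)"
proof -
  interpret amply_equivalent_fans \<Sigma>1 \<Sigma>2 \<Psi>
    using assms by unfold_locales
  show ?thesis
    unfolding Q_ample_def using strat_equiv_pull by simp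
qed

end
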